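(* Let $\varphi: S\to R$ be a ring morphism, $W\in S$, $(X,d)$ a finite rank matrix factorisation of $W$ over $R$ with fixed homogeneous $R$-basis $\{\xi_i\}$, and $\mathbf{t}=\{t_1,\ldots,t_n\}$ a quasi-regular sequence in $R$ with odd $R$-linear maps $\lambda_j$ on $X$ satisfying $\lambda_j d + d\lambda_j = t_j\cdot 1_X$. Suppose given $S$-linear maps $\sigma: R/\mathbf{t}R\to K(\mathbf{t})$ (a morphism of complexes) and $h$ of degree $-1$ on $K(\mathbf{t})$ with $\pi\sigma=1$, $\sigma\pi = 1+\delta h + h\delta$, $h^2=0$, $h\sigma = 0$, $\pi h = 0$. Let $\sigma_\infty = \sum_{m\ge0}(hd)^m\sigma: X/\mathbf{t}X\to X\otimes_R K(\mathbf{t})$, $\psi = \varepsilon\circ\sigma_\infty: X/\mathbf{t}X\to X[n]$, and $\vartheta = (-1)^n\lambda_1\cdots\lambda_n: X[n]\to X/\mathbf{t}X$ (the map $X\to X$ followed by the quotient). Then $\psi\circ\vartheta = 1$ in the homotopy category $\mathrm{hf}(S,W)$, hence $e = \vartheta\circ\psi$ is an idempotent endomorphism of $X/\mathbf{t}X$ in $\mathrm{hf}(S,W)$, and \[ e = (-1)^n\lambda_1\cdots\lambda_n\,\varepsilon\,(hd)^n\sigma. \]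
   Context: All rings commutative. Linear factorisation of $W$ over $R$: $\mathbb{Z}/2$-graded $R$-module with odd $R$-linear $d$, $d^2=W\cdot1$; morphisms are even maps commuting with differentials; $\mathrm{hf}(S,W)$ is the homotopy category of linear factorisations of $W$ over $S$ (all $R$-modules being viewed as $S$-modules via $\varphi$). $X[n]$ is the $n$-fold suspension. The Koszul complex $K(\mathbf{t})$ is the exterior algebra on free symbols $\mathrm{d}t_1,\ldots,\mathrm{d}t_n$ of degree $-1$ with differential $\delta$ = contraction with $\sum_it_i(\mathrm{d}t_i)^*$; $\pi: K(\mathbf{t})\to R/\mathbf{t}R$ is the augmentation. $X\otimes_RK(\mathbf{t})$ is formed with the $\mathbb{Z}/2$-folding of $K(\mathbf{t})$ and has differential $d\otimes1+1\otimes\delta$. The maps $h,\sigma$ are extended using the basis by $h(\xi_i\otimes m) = (-1)^{|\xi_i|}\xi_i\otimes h(m)$, $\sigma(\xi_i\otimes p) = \xi_i\otimes\sigma(p)$, and $d$ means $d\otimes 1$. The map $\varepsilon: X\otimes K(\mathbf{t})\to X[n]$ sends $x\otimes\mathrm{d}t_1\cdots\mathrm{d}t_n\mapsto(-1)^{n|x|}x$ and vanishes on the other exterior degrees. $X/\mathbf{t}X = X\otimes_RR/\mathbf{t}R$. *)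

theory Defs
  imports Main
begin

text \<open>X is free of finite rank r over R with homogeneous basis xi_0..xi_(r-1); par i = True iff
  xi_i is odd. Elements of X are coordinate vectors nat => 'r vanishing at indices >= r;
  R-linear maps on X are matrices. t_1..t_n are t 0 .. t (n-1).\<close>

definition is_ring_hom :: "('s::comm_ring_1 \<Rightarrow> 'r::comm_ring_1) \<Rightarrow> bool" where
  "is_ring_hom phi \<longleftrightarrow> phi 0 = 0 \<and> phi 1 = 1 \<and> (\<forall>a b. phi (a + b) = phi a + phi b)
      \<and> (\<forall>a b. phi (a * b) = phi a * phi b)"

definition in_tideal :: "(nat \<Rightarrow> 'r::comm_ring_1) \<Rightarrow> nat \<Rightarrow> 'r \<Rightarrow> bool" where
  "in_tideal t n a \<longleftrightarrow> (\<exists>c. a = (\<Sum>i<n. c i * t i))"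

definition vecs :: "nat \<Rightarrow> (nat \<Rightarrow> 'r::zero) set" where
  "vecs r = {x. \<forall>i\<ge>r. x i = 0}"

definition mv :: "nat \<Rightarrow> (nat \<Rightarrow> nat \<Rightarrow> 'r::comm_ring_1) \<Rightarrow> (nat \<Rightarrow> 'r) \<Rightarrow> nat \<Rightarrow> 'r" where
  "mv r M x = (\<lambda>i. if i < r then (\<Sum>j<r. M i j * x j) else 0)"

definition odd_matrix :: "nat \<Rightarrow> (nat \<Rightarrow> bool) \<Rightarrow> (nat \<Rightarrow> nat \<Rightarrow> 'r::zero) \<Rightarrow> bool" where
  "odd_matrix r par M \<longleftrightarrow> (\<forall>i<r. \<forall>j<r. par i = par j \<longrightarrow> M i j = 0)"

definition is_mf :: "nat \<Rightarrow> (nat \<Rightarrow> bool) \<Rightarrow> 'r::comm_ring_1 \<Rightarrow> (nat \<Rightarrow> nat \<Rightarrow> 'r) \<Rightarrow> bool" where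
  "is_mf r par w D \<longleftrightarrow> odd_matrix r par D \<and>
     (\<forall>i<r. \<forall>j<r. (\<Sum>k<r. D i k * D k j) = (if i = j then w else 0))"

definition even_vec :: "nat \<Rightarrow> (nat \<Rightarrow> bool) \<Rightarrow> (nat \<Rightarrow> 'r::zero) \<Rightarrow> bool" where
  "even_vec r par x \<longleftrightarrow> (\<forall>i<r. par i \<longrightarrow> x i = 0)"

definition odd_vec :: "nat \<Rightarrow> (nat \<Rightarrow> bool) \<Rightarrow> (nat \<Rightarrow> 'r::zero) \<Rightarrow> bool" where
  "odd_vec r par x \<longleftrightarrow> (\<forall>i<r. \<not> par i \<longrightarrow> x i = 0)"

text \<open>K(t): coefficient functions on subsets B of {0..n-1}; B stands for the wedge of the
  dt_i, i in B, in increasing order. Exterior degree of B is card B (Z-degree -card B).\<close>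
definition kos :: "nat \<Rightarrow> (nat set \<Rightarrow> 'r::zero) set" where
  "kos n = {k. \<forall>B. \<not> B \<subseteq> {..<n} \<longrightarrow> k B = 0}"

definition homog :: "nat \<Rightarrow> (nat set \<Rightarrow> 'r::zero) \<Rightarrow> bool" where
  "homog p k \<longleftrightarrow> (\<forall>B. card B \<noteq> p \<longrightarrow> k B = 0)"

text \<open>delta = contraction with sum_i t_i (dt_i)^*.\<close>
definition kdelta :: "(nat \<Rightarrow> 'r::comm_ring_1) \<Rightarrow> nat \<Rightarrow> (nat set \<Rightarrow> 'r) \<Rightarrow> nat set \<Rightarrow> 'r" where
  "kdelta t n k = (\<lambda>B. if B \<subseteq> {..<n} then
      (\<Sum>i\<in>{..<n} - B. (-1) ^ card {b\<in>B. b < i} * t i * k (insert i B)) else 0)"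

definition quasi_regular :: "(nat \<Rightarrow> 'r::comm_ring_1) \<Rightarrow> nat \<Rightarrow> bool" where
  "quasi_regular t n \<longleftrightarrow> (\<forall>p\<ge>1. \<forall>k\<in>kos n. homog p k \<and> kdelta t n k = (\<lambda>_. 0) \<longrightarrow>
      (\<exists>k'\<in>kos n. homog (p + 1) k' \<and> kdelta t n k' = k))"

text \<open>An element of X (x) K(t) is sum_i xi_i (x) z i, encoded as z :: nat => nat set => 'r.\<close>
definition dT :: "nat \<Rightarrow> (nat \<Rightarrow> nat \<Rightarrow> 'r::comm_ring_1) \<Rightarrow> (nat \<Rightarrow> nat set \<Rightarrow> 'r) \<Rightarrow> nat \<Rightarrow> nat set \<Rightarrow> 'r" where
  "dT r D z = (\<lambda>i B. if i < r then (\<Sum>j<r. D i j * z j B) else 0)"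

definition hT :: "nat \<Rightarrow> (nat \<Rightarrow> bool) \<Rightarrow> ((nat set \<Rightarrow> 'r::comm_ring_1) \<Rightarrow> (nat set \<Rightarrow> 'r))
     \<Rightarrow> (nat \<Rightarrow> nat set \<Rightarrow> 'r) \<Rightarrow> nat \<Rightarrow> nat set \<Rightarrow> 'r" where
  "hT r par h z = (\<lambda>i B. if i < r then (if par i then -1 else 1) * h (z i) B else 0)"

definition sigT :: "nat \<Rightarrow> ('r::comm_ring_1 \<Rightarrow> nat set \<Rightarrow> 'r) \<Rightarrow> (nat \<Rightarrow> 'r) \<Rightarrow> nat \<Rightarrow> nat set \<Rightarrow> 'r" where
  "sigT r sigma x = (\<lambda>i B. if i < r then sigma (x i) B else 0)"

text \<open>epsilon : X (x) K(t) -> X[n], x (x) dt_1...dt_n |-> (-1)^(n|x|) x.\<close>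
definition epsT :: "nat \<Rightarrow> (nat \<Rightarrow> bool) \<Rightarrow> nat \<Rightarrow> (nat \<Rightarrow> nat set \<Rightarrow> 'r::comm_ring_1) \<Rightarrow> nat \<Rightarrow> 'r" where
  "epsT r par n z = (\<lambda>i. if i < r then (if par i then (-1) ^ n else 1) * z i {..<n} else 0)"

definition sig_inf :: "nat \<Rightarrow> (nat \<Rightarrow> bool) \<Rightarrow> (nat \<Rightarrow> nat \<Rightarrow> 'r::comm_ring_1)
    \<Rightarrow> ((nat set \<Rightarrow> 'r) \<Rightarrow> (nat set \<Rightarrow> 'r)) \<Rightarrow> ('r \<Rightarrow> nat set \<Rightarrow> 'r) \<Rightarrow> (nat \<Rightarrow> 'r) \<Rightarrow> nat \<Rightarrow> nat set \<Rightarrow> 'r" where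
  "sig_inf r par D h sigma x = (\<lambda>i B.
     \<Sum>m\<in>{m. ((hT r par h \<circ> dT r D) ^^ m) (sigT r sigma x) i B \<noteq> 0}.
        ((hT r par h \<circ> dT r D) ^^ m) (sigT r sigma x) i B)"

definition psi :: "nat \<Rightarrow> (nat \<Rightarrow> bool) \<Rightarrow> nat \<Rightarrow> (nat \<Rightarrow> nat \<Rightarrow> 'r::comm_ring_1)
    \<Rightarrow> ((nat set \<Rightarrow> 'r) \<Rightarrow> (nat set \<Rightarrow> 'r)) \<Rightarrow> ('r \<Rightarrow> nat set \<Rightarrow> 'r) \<Rightarrow> (nat \<Rightarrow> 'r) \<Rightarrow> nat \<Rightarrow> 'r" where
  "psi r par n D h sigma x = epsT r par n (sig_inf r par D h sigma x)"

text \<open>lamprod r L k = lambda_1 o ... o lambda_k  (lambda_j is the matrix L (j-1)).\<close>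
fun lamprod :: "nat \<Rightarrow> (nat \<Rightarrow> nat \<Rightarrow> nat \<Rightarrow> 'r::comm_ring_1) \<Rightarrow> nat \<Rightarrow> (nat \<Rightarrow> 'r) \<Rightarrow> nat \<Rightarrow> 'r" where
  "lamprod r L 0 x = x"
| "lamprod r L (Suc k) x = lamprod r L k (mv r (L k) x)"

text \<open>theta = (-1)^n lambda_1 ... lambda_n (on representatives; the target is X/tX).\<close>
definition theta :: "nat \<Rightarrow> nat \<Rightarrow> (nat \<Rightarrow> nat \<Rightarrow> nat \<Rightarrow> 'r::comm_ring_1) \<Rightarrow> (nat \<Rightarrow> 'r) \<Rightarrow> nat \<Rightarrow> 'r" where
  "theta r n L x = (\<lambda>i. (-1) ^ n * lamprod r L n x i)"

definition qeq :: "(nat \<Rightarrow> 'r::comm_ring_1) \<Rightarrow> nat \<Rightarrow> (nat \<Rightarrow> 'r) \<Rightarrow> (nat \<Rightarrow> 'r) \<Rightarrow> bool" where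
  "qeq t n x y \<longleftrightarrow> (\<forall>i. in_tideal t n (x i - y i))"

text \<open>Odd S-linear endomorphism of X (equivalently of X[n]: the shift does not change oddness).\<close>
definition odd_Smap :: "('s::comm_ring_1 \<Rightarrow> 'r::comm_ring_1) \<Rightarrow> nat \<Rightarrow> (nat \<Rightarrow> bool)
     \<Rightarrow> ((nat \<Rightarrow> 'r) \<Rightarrow> (nat \<Rightarrow> 'r)) \<Rightarrow> bool" where
  "odd_Smap phi r par H \<longleftrightarrow>
     (\<forall>x\<in>vecs r. H x \<in> vecs r) \<and>
     (\<forall>x\<in>vecs r. \<forall>y\<in>vecs r. H (\<lambda>i. x i + y i) = (\<lambda>i. H x i + H y i)) \<and>
     (\<forall>s. \<forall>x\<in>vecs r. H (\<lambda>i. phi s * x i) = (\<lambda>i. phi s * H x i)) \<and>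
     (\<forall>x\<in>vecs r. even_vec r par x \<longrightarrow> odd_vec r par (H x)) \<and>
     (\<forall>x\<in>vecs r. odd_vec r par x \<longrightarrow> even_vec r par (H x))"

definition odd_Smap_quot :: "('s::comm_ring_1 \<Rightarrow> 'r::comm_ring_1) \<Rightarrow> (nat \<Rightarrow> 'r) \<Rightarrow> nat \<Rightarrow> nat
     \<Rightarrow> (nat \<Rightarrow> bool) \<Rightarrow> ((nat \<Rightarrow> 'r) \<Rightarrow> (nat \<Rightarrow> 'r)) \<Rightarrow> bool" where
  "odd_Smap_quot phi t n r par H \<longleftrightarrow>
     (\<forall>x\<in>vecs r. H x \<in> vecs r) \<and>
     (\<forall>x\<in>vecs r. \<forall>y\<in>vecs r. qeq t n x y \<longrightarrow> qeq t n (H x) (H y)) \<and>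
     (\<forall>x\<in>vecs r. \<forall>y\<in>vecs r. qeq t n (H (\<lambda>i. x i + y i)) (\<lambda>i. H x i + H y i)) \<and>
     (\<forall>s. \<forall>x\<in>vecs r. qeq t n (H (\<lambda>i. phi s * x i)) (\<lambda>i. phi s * H x i)) \<and>
     (\<forall>x\<in>vecs r. even_vec r par x \<longrightarrow> (\<exists>y. qeq t n (H x) y \<and> odd_vec r par y)) \<and>
     (\<forall>x\<in>vecs r. odd_vec r par x \<longrightarrow> (\<exists>y. qeq t n (H x) y \<and> even_vec r par y))"

end

theory Submission
  imports Defs "HOL-Library.Function_Algebras"
begin

text \<open>The Koszul complex of \<open>t\<close> is a resolution of \<open>R/tR\<close> via \<open>\<sigma>\<close>, \<open>\<pi>\<close>, \<open>h\<close>; tensoring with \<open>X\<close>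
  perturbs \<open>\<delta>\<close> by \<open>d\<close>, and since \<open>hd\<close> raises the exterior degree it is nilpotent, so the
  perturbation lemma applies with the finite Neumann series \<open>\<Sum>\<^sub>m (hd)\<^sup>m\<close>. Only the top exterior
  degree survives \<open>\<epsilon>\<close>, which gives the formula for \<open>\<psi>\<close>. For \<open>\<psi>\<theta> \<simeq> 1\<close>, the identity
  \<open>\<lambda>\<^sub>j d + d \<lambda>\<^sub>j = t\<^sub>j\<close> yields an explicit lift \<open>\<Phi>\<close> of \<open>\<theta>\<close> to a chain map
  \<open>X[n] \<rightarrow> X \<otimes> K(t)\<close>, \<open>\<Phi>(x) = \<Sum>\<^sub>B \<plusminus>\<lambda>\<^sub>C(x) \<otimes> dt\<^sub>B\<close> with \<open>C\<close> the complement of \<open>B\<close>, with \<open>\<epsilon>\<Phi> = 1\<close> and \<open>\<pi>\<Phi> = \<theta>\<close>; the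
  perturbed homotopy applied to \<open>\<Phi>\<close> is the required homotopy \<open>\<psi>\<theta> - 1 = dH + Hd\<close>. Conjugating it
  by \<open>\<theta>\<close> shows that \<open>e = \<theta>\<psi>\<close> is idempotent up to homotopy.\<close>

section \<open>Perturbation by a nilpotent operator\<close>

locale nilpotent_perturbation =
  fixes T :: "'v::ab_group_add set" and h d e P :: "'v \<Rightarrow> 'v" and N :: nat
  assumes zero_closed: "0 \<in> T" and add_closed: "x \<in> T \<Longrightarrow> y \<in> T \<Longrightarrow> x + y \<in> T"
    and uminus_closed: "x \<in> T \<Longrightarrow> - x \<in> T"
    and h_closed: "x \<in> T \<Longrightarrow> h x \<in> T" and d_closed: "x \<in> T \<Longrightarrow> d x \<in> T"
    and e_closed: "x \<in> T \<Longrightarrow> e x \<in> T" and P_closed: "x \<in> T \<Longrightarrow> P x \<in> T"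
    and h_add: "x \<in> T \<Longrightarrow> y \<in> T \<Longrightarrow> h (x + y) = h x + h y"
    and d_add: "x \<in> T \<Longrightarrow> y \<in> T \<Longrightarrow> d (x + y) = d x + d y"
    and e_add: "x \<in> T \<Longrightarrow> y \<in> T \<Longrightarrow> e (x + y) = e x + e y"
    and homotopy: "x \<in> T \<Longrightarrow> e (h x) + h (e x) = P x - x"
    and anticommute: "x \<in> T \<Longrightarrow> d (e x) + e (d x) = 0"
    and hh_zero: "x \<in> T \<Longrightarrow> h (h x) = 0"
    and h_dd_commute: "x \<in> T \<Longrightarrow> h (d (d x)) = d (d (h x))"
    and nilpotent: "x \<in> T \<Longrightarrow> ((h \<circ> d) ^^ Suc N) x = 0"
begin

lemma diff_closed: "x \<in> T \<Longrightarrow> y \<in> T \<Longrightarrow> x - y \<in> T"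
  using add_closed uminus_closed by (metis diff_conv_add_uminus)

lemma additive_on_basics:
  assumes "\<And>x. x \<in> T \<Longrightarrow> f x \<in> T" "\<And>x y. x \<in> T \<Longrightarrow> y \<in> T \<Longrightarrow> f (x + y) = f x + f y"
  shows "f 0 = 0" "x \<in> T \<Longrightarrow> f (- x) = - f x" "x \<in> T \<Longrightarrow> y \<in> T \<Longrightarrow> f (x - y) = f x - f y"
proof -
  show f0: "f 0 = 0" using assms(2)[OF zero_closed zero_closed] by simp
  have fn: "\<And>x. x \<in> T \<Longrightarrow> f (- x) = - f x"
    using assms(2) uminus_closed f0 by (metis add.right_inverse add_eq_0_iff2)
  then show "x \<in> T \<Longrightarrow> f (- x) = - f x" by blast
  show "x \<in> T \<Longrightarrow> y \<in> T \<Longrightarrow> f (x - y) = f x - f y"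
    using assms(2)[of x "-y"] uminus_closed fn[of y] by simp
qed

lemma sum_closed: "(\<And>i. i \<in> S \<Longrightarrow> f i \<in> T) \<Longrightarrow> sum f S \<in> T"
  by (induction S rule: infinite_finite_induct) (auto simp: zero_closed add_closed)

lemma additive_on_sum:
  assumes "\<And>x. x \<in> T \<Longrightarrow> F x \<in> T" "\<And>x y. x \<in> T \<Longrightarrow> y \<in> T \<Longrightarrow> F (x + y) = F x + F y"
  shows "finite S \<Longrightarrow> (\<And>i. i \<in> S \<Longrightarrow> f i \<in> T) \<Longrightarrow> F (sum f S) = (\<Sum>i\<in>S. F (f i))"
proof (induction S rule: finite_induct)
  case empty then show ?case using additive_on_basics(1)[OF assms] by simp
next
  case (insert x S) then show ?case by (simp add: assms(2) sum_closed)
qed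

lemma h_uminus: "x \<in> T \<Longrightarrow> h (- x) = - h x"
  and h_diff: "x \<in> T \<Longrightarrow> y \<in> T \<Longrightarrow> h (x - y) = h x - h y"
  by (rule additive_on_basics[of h]; simp add: h_closed h_add)+

lemma d_zero: "d 0 = 0"
  by (rule additive_on_basics(1)[of d]) (simp_all add: d_closed d_add)

definition g :: "'v \<Rightarrow> 'v" where "g = h \<circ> d"

lemma g_closed: "x \<in> T \<Longrightarrow> g x \<in> T" by (simp add: g_def h_closed d_closed)
lemma g_add: "x \<in> T \<Longrightarrow> y \<in> T \<Longrightarrow> g (x + y) = g x + g y"
  by (simp add: g_def d_add h_add d_closed)

lemma g_pow_closed: "x \<in> T \<Longrightarrow> (g ^^ m) x \<in> T"
  by (induction m) (auto simp: g_closed)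
lemma g_pow_add: "x \<in> T \<Longrightarrow> y \<in> T \<Longrightarrow> (g ^^ m) (x + y) = (g ^^ m) x + (g ^^ m) y"
  by (induction m) (auto simp: g_add g_pow_closed)

text \<open>The Neumann series of \<open>g\<close>, i.e.\ \<open>(1 - g)\<^sup>-\<^sup>1\<close>; it is finite because \<open>g\<close> is nilpotent.\<close>
definition neumann :: "'v \<Rightarrow> 'v" where "neumann y = (\<Sum>m\<le>N. (g ^^ m) y)"

lemma neumann_closed: "y \<in> T \<Longrightarrow> neumann y \<in> T"
  unfolding neumann_def by (simp add: sum_closed g_pow_closed)
lemma neumann_add: "x \<in> T \<Longrightarrow> y \<in> T \<Longrightarrow> neumann (x + y) = neumann x + neumann y"
  by (simp add: neumann_def g_pow_add sum.distrib)
lemma neumann_zero: "neumann 0 = 0"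
  and neumann_diff: "x \<in> T \<Longrightarrow> y \<in> T \<Longrightarrow> neumann (x - y) = neumann x - neumann y"
  by (rule additive_on_basics[of neumann]; simp add: neumann_closed neumann_add)+

lemma g_neumann: "y \<in> T \<Longrightarrow> g (neumann y) = (\<Sum>m\<le>N. (g ^^ Suc m) y)"
  unfolding neumann_def by (subst additive_on_sum[OF g_closed g_add]) (auto simp: g_pow_closed)

lemma neumann_unfold: "y \<in> T \<Longrightarrow> neumann y = y + g (neumann y)"
proof -
  assume y: "y \<in> T"
  have "g (neumann y) = (\<Sum>m\<le>Suc N. (g ^^ m) y) - y"
    using g_neumann[OF y] sum.atMost_Suc_shift[of "\<lambda>m. (g ^^ m) y" N] by simp
  also have "\<dots> = neumann y - y" using nilpotent[OF y] by (simp add: neumann_def g_def)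
  finally show ?thesis by simp
qed

lemma neumann_g: "y \<in> T \<Longrightarrow> neumann (g y) = neumann y - y"
  using g_neumann[of y] neumann_unfold[of y] by (simp add: neumann_def funpow_swap1)

lemma neumann_g_cycle: "y \<in> T \<Longrightarrow> g y = 0 \<Longrightarrow> neumann y = y"
  using neumann_g[of y] neumann_zero g_def by simp

lemma neumann_unique:
  assumes v: "v \<in> T" and y: "y \<in> T" and eq: "v = y + g v"
  shows "v = neumann y"
proof -
  have "v = (\<Sum>m\<le>k. (g ^^ m) y) + (g ^^ Suc k) v" for k
  proof (induction k)
    case 0 then show ?case using eq by simp
  next
    case (Suc k)
    have "(g ^^ Suc k) v = (g ^^ Suc k) y + (g ^^ Suc (Suc k)) v"
      using eq g_pow_add[OF y g_closed[OF v], of "Suc k"] by (metis funpow_Suc_right o_apply)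
    then show ?case using Suc by (simp add: add.assoc)
  qed
  from this[of N] show ?thesis using nilpotent[OF v] by (simp add: neumann_def g_def)
qed

lemma neumann_commute:
  assumes F_closed: "\<And>x. x \<in> T \<Longrightarrow> F x \<in> T"
    and F_add: "\<And>x y. x \<in> T \<Longrightarrow> y \<in> T \<Longrightarrow> F (x + y) = F x + F y"
    and F_h: "\<And>x. x \<in> T \<Longrightarrow> F (h x) = h (F x)" and F_d: "\<And>x. x \<in> T \<Longrightarrow> F (d x) = d (F x)"
    and y: "y \<in> T"
  shows "F (neumann y) = neumann (F y)"
proof -
  have F_pow: "F ((g ^^ m) y) = (g ^^ m) (F y)" for m
  proof (induction m)
    case (Suc m)
    then show ?case using F_h[OF d_closed[OF g_pow_closed[OF y]]] F_d[OF g_pow_closed[OF y]]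
      by (simp add: g_def o_def)
  qed simp
  have "F (neumann y) = (\<Sum>m\<le>N. F ((g ^^ m) y))" unfolding neumann_def
    by (rule additive_on_sum[OF F_closed F_add]) (auto simp: g_pow_closed y)
  then show ?thesis by (simp add: F_pow neumann_def)
qed

text \<open>The identities below are the two halves of the basic perturbation lemma for the perturbed
  homotopy \<open>neumann \<circ> h\<close>; \<open>d\<close> plays the role of the perturbation.\<close>

lemma neumann_homotopy_identity:
  assumes z: "z \<in> T"
  defines "u \<equiv> neumann (h z)"
  shows "e u + d u + neumann (h (e z)) + neumann (h (d z)) = neumann (P (z + d u)) - z"
proof -
  define b where "b = z + d u"
  have uT: "u \<in> T" unfolding u_def by (simp add: neumann_closed h_closed z)
  have bT: "b \<in> T" unfolding b_def by (simp add: add_closed z d_closed uT)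
  have hb: "h b = u"
    unfolding b_def using neumann_unfold[OF h_closed[OF z]]
    by (simp add: h_add z d_closed uT u_def[symmetric] g_def)
  have eb: "e b = e z - d (e u)"
    unfolding b_def using e_add[OF z d_closed[OF uT]] anticommute[OF uT]
    by (simp add: eq_neg_iff_add_eq_0 add.commute)
  have "e u = P b - b - h (e b)" using homotopy[OF bT] hb by (simp add: algebra_simps)
  also have "h (e b) = h (e z) - g (e u)" unfolding eb g_def
    by (simp add: h_diff e_closed z d_closed uT)
  finally have "e u = (P b - b - h (e z)) + g (e u)" by (simp add: algebra_simps)
  then have eu: "e u = neumann (P b - b - h (e z))"
    by (intro neumann_unique e_closed uT diff_closed P_closed bT h_closed z)
  have "g (d u) = 0" unfolding g_def using h_dd_commute[OF uT] hh_zero[OF bT] hb by (simp add: d_zero)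
  then have "neumann b = z + neumann (g z) + d u"
    unfolding b_def using neumann_add[OF z d_closed[OF uT]] neumann_g_cycle[OF d_closed[OF uT]]
    by (simp add: neumann_g[OF z])
  moreover have "neumann (P b - b - h (e z)) = neumann (P b) - neumann b - neumann (h (e z))"
    by (simp add: neumann_diff diff_closed P_closed bT h_closed e_closed z)
  ultimately show ?thesis using eu by (simp add: b_def g_def algebra_simps)
qed

lemma neumann_cycle_identity:
  assumes y: "y \<in> T" and hy: "h y = 0" and ey: "e y = 0"
  defines "v \<equiv> neumann y"
  shows "e v + d v = neumann (P (d v))"
proof -
  have vT: "v \<in> T" unfolding v_def by (simp add: neumann_closed y)
  have v_unfold: "v = y + h (d v)" unfolding v_def using neumann_unfold[OF y] by (simp add: g_def)
  have hv: "h v = 0"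
    using h_add[OF y h_closed[OF d_closed[OF vT]]] hy hh_zero[OF d_closed[OF vT]] v_unfold by simp
  have "e v = e (h (d v))" using e_add[OF y h_closed[OF d_closed[OF vT]]] ey v_unfold by simp
  also have "\<dots> = P (d v) - d v - h (e (d v))"
    using homotopy[OF d_closed[OF vT]] by (simp add: algebra_simps)
  also have "e (d v) = - d (e v)"
    using anticommute[OF vT] by (simp add: eq_neg_iff_add_eq_0 add.commute)
  also have "h (- d (e v)) = - g (e v)"
    using h_uminus[OF d_closed[OF e_closed[OF vT]]] by (simp add: g_def)
  finally have "e v = (P (d v) - d v) + g (e v)" by simp
  then have ev: "e v = neumann (P (d v) - d v)"
    by (intro neumann_unique e_closed vT diff_closed P_closed d_closed)
  have "neumann (d v) = d v"
    by (rule neumann_g_cycle[OF d_closed[OF vT]]) (simp add: g_def h_dd_commute[OF vT] hv d_zero)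
  then show ?thesis using ev by (simp add: neumann_diff P_closed d_closed vT)
qed

end

definition psign :: "bool \<Rightarrow> 'a::comm_ring_1" where "psign b = (if b then -1 else 1)"

lemma psign_sq [simp]: "psign b * psign b = 1" by (simp add: psign_def)
lemma psign_sq_mult [simp]: "psign b * (psign b * x) = x" by (simp add: psign_def)

lemma sum_fun_apply: "(sum f F) x = (\<Sum>a\<in>F. f a x)" for f :: "'a \<Rightarrow> 'b \<Rightarrow> 'c::comm_monoid_add"
  by (induction F rule: infinite_finite_induct) auto

lemma minus_one_power_odd_sum: "odd (a + b) \<Longrightarrow> (-1::'a::comm_ring_1) ^ a = - ((-1) ^ b)"
  by (auto simp: minus_one_power_iff)

lemma kosI: "(\<And>B. \<not> B \<subseteq> {..<n} \<Longrightarrow> k B = 0) \<Longrightarrow> k \<in> kos n"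
  by (auto simp: kos_def)
lemma kosD: "k \<in> kos n \<Longrightarrow> \<not> B \<subseteq> {..<n} \<Longrightarrow> k B = 0"
  by (auto simp: kos_def)

lemma kos_zero [simp]: "0 \<in> kos n" and kos_const_zero [simp]: "(\<lambda>_. 0) \<in> kos n"
  by (simp_all add: kos_def)
lemma kos_plus [intro]: "(k1::nat set \<Rightarrow> 'a::monoid_add) \<in> kos n \<Longrightarrow> k2 \<in> kos n \<Longrightarrow> k1 + k2 \<in> kos n"
  by (simp add: kos_def)
lemma kos_uminus [intro]: "(k::nat set \<Rightarrow> 'a::group_add) \<in> kos n \<Longrightarrow> - k \<in> kos n"
  by (simp add: kos_def)
lemma kos_sum [intro]:
  "(\<And>j. j \<in> F \<Longrightarrow> (k j::nat set \<Rightarrow> 'a::semiring_0) \<in> kos n) \<Longrightarrow> (\<lambda>B. \<Sum>j\<in>F. c j * k j B) \<in> kos n"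
  by (simp add: kos_def)
lemma kdelta_kos [intro]: "kdelta t n k \<in> kos n" by (simp add: kos_def kdelta_def)

lemma kos_card_le: "k \<in> kos n \<Longrightarrow> k B \<noteq> 0 \<Longrightarrow> card B \<le> n"
  using kosD[of k n B] card_mono[of "{..<n}" B] by fastforce

lemma kdelta_sum: "kdelta t n (\<lambda>B. \<Sum>j\<in>F. c j * k j B) = (\<lambda>B. \<Sum>j\<in>F. c j * kdelta t n (k j) B)"
  unfolding kdelta_def
  by (rule ext) (simp add: sum_distrib_left sum_distrib_right mult_ac sum.swap[of _ F])

lemma kdelta_scal: "kdelta t n (\<lambda>B. c * k B) = (\<lambda>B. c * kdelta t n k B)"
  unfolding kdelta_def by (auto simp: sum_distrib_left algebra_simps intro!: ext)

lemma kdelta_plus: "kdelta t n (k1 + k2) = kdelta t n k1 + kdelta t n k2"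
  unfolding kdelta_def by (auto simp: sum.distrib algebra_simps intro!: ext)

definition deg_supp :: "nat set \<Rightarrow> (nat set \<Rightarrow> 'a::zero) \<Rightarrow> bool" where
  "deg_supp S k \<longleftrightarrow> (\<forall>B. k B \<noteq> 0 \<longrightarrow> card B \<in> S)"

lemma deg_supp_mono: "deg_supp S k \<Longrightarrow> S \<subseteq> S' \<Longrightarrow> deg_supp S' k" by (auto simp: deg_supp_def)

lemma deg_supp_above_zero: "k \<in> kos n \<Longrightarrow> deg_supp {Suc n..} k \<Longrightarrow> k = 0"
  by (fastforce simp: deg_supp_def dest: kos_card_le)

lemma vecsD: "x \<in> vecs r \<Longrightarrow> \<not> i < r \<Longrightarrow> x i = 0" by (simp add: vecs_def)
lemma mv_vecs [simp]: "mv r M x \<in> vecs r" by (simp add: mv_def vecs_def)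

lemma mv_add: "mv r M (x + y) = mv r M x + mv r M y"
  by (simp add: mv_def sum.distrib algebra_simps fun_eq_iff)
lemma mv_scal: "mv r M (\<lambda>i. c * x i) = (\<lambda>i. c * mv r M x i)"
  by (simp add: mv_def sum_distrib_left algebra_simps fun_eq_iff)
lemma mv_diff: "mv r M (x - y) = mv r M x - mv r M y"
  by (simp add: mv_def sum_subtractf algebra_simps fun_eq_iff)

lemma epsT_vecs: "epsT r par n z \<in> vecs r" by (simp add: epsT_def vecs_def)
lemma epsT_add: "epsT r par n (z1 + z2) = epsT r par n z1 + epsT r par n z2"
  by (simp add: epsT_def fun_eq_iff algebra_simps)
lemma epsT_diff: "epsT r par n (z1 - z2) = epsT r par n z1 - epsT r par n z2"
  by (simp add: epsT_def fun_eq_iff algebra_simps)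
lemma epsT_sum: "epsT r par n (\<Sum>m\<in>F. z m) = (\<Sum>m\<in>F. epsT r par n (z m))"
  by (auto simp: epsT_def fun_eq_iff sum_distrib_left sum_fun_apply)
lemma epsT_scal: "epsT r par n (\<lambda>i B. c * z i B) = (\<lambda>i. c * epsT r par n z i)"
  by (simp add: epsT_def fun_eq_iff algebra_simps)

lemma tideal_zero: "in_tideal t n 0"
  unfolding in_tideal_def by (rule exI[of _ "\<lambda>_. 0"]) simp

lemma tideal_add: "in_tideal t n a \<Longrightarrow> in_tideal t n b \<Longrightarrow> in_tideal t n (a + b)"
  unfolding in_tideal_def
  by (elim exE, rule_tac x="\<lambda>i. c i + ca i" in exI) (simp add: sum.distrib distrib_right)

lemma tideal_mult: "in_tideal t n a \<Longrightarrow> in_tideal t n (c * a)"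
  unfolding in_tideal_def
  by (elim exE, rule_tac x="\<lambda>i. c * ca i" in exI) (simp add: sum_distrib_left mult.assoc)

lemma tideal_uminus: "in_tideal t n a \<Longrightarrow> in_tideal t n (- a)"
  using tideal_mult[of t n a "-1"] by simp

lemma tideal_sum: "(\<And>j. j \<in> F \<Longrightarrow> in_tideal t n (f j)) \<Longrightarrow> in_tideal t n (\<Sum>j\<in>F. f j)"
  by (induction F rule: infinite_finite_induct) (auto simp: tideal_zero tideal_add)

lemma tideal_gen: "j < n \<Longrightarrow> in_tideal t n (t j)"
  unfolding in_tideal_def
  by (rule exI[of _ "\<lambda>i. if i = j then 1 else 0"]) (simp add: if_distrib[of "\<lambda>c. c * _"] cong: if_cong)

lemma tideal_mv: "(\<And>j. in_tideal t n (x j)) \<Longrightarrow> in_tideal t n (mv r M x i)"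
  by (auto simp: mv_def tideal_zero intro!: tideal_sum tideal_mult)

lemma qeq_refl: "qeq t n x x" by (simp add: qeq_def tideal_zero)

definition tri :: "nat \<Rightarrow> nat" where "tri m = m * (m + 1) div 2"

lemma tri_Suc: "tri (Suc m) = tri m + Suc m"
proof -
  have "Suc m * (Suc m + 1) = m * (m + 1) + 2 * Suc m" by simp
  then show ?thesis unfolding tri_def by simp
qed

lemma even_sum_lessThan_tri: "even (\<Sum>{..<k} + tri k + k)"
proof (induction k)
  case (Suc k)
  have "\<Sum>{..<Suc k} + tri (Suc k) + Suc k = (\<Sum>{..<k} + tri k + k) + 2 * Suc k"
    by (simp add: tri_Suc)
  then show ?case using Suc.IH by (metis dvd_add dvd_triv_left)
qed (simp add: tri_def)

lemma card_below_split:
  assumes B: "B \<subseteq> {..<n}" and j: "j < n"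
  shows "card {b\<in>B. b < j} + card {c\<in>{..<n} - B. c < j} = j"
proof -
  have "{b\<in>B. b < j} \<union> {c\<in>{..<n} - B. c < j} = {..<j}" using B j by auto
  moreover have "{b\<in>B. b < j} \<inter> {c\<in>{..<n} - B. c < j} = {}" by auto
  moreover have "finite {b\<in>B. b < j}" "finite {c\<in>{..<n} - B. c < j}" by auto
  ultimately show ?thesis by (metis card_Un_disjoint card_lessThan)
qed


section \<open>The Koszul resolution tensored with \<open>X\<close>\<close>

locale mf_koszul =
  fixes phi :: "'s::comm_ring_1 \<Rightarrow> 'r::comm_ring_1"
    and W :: 's
    and r :: nat and par :: "nat \<Rightarrow> bool" and D :: "nat \<Rightarrow> nat \<Rightarrow> 'r"
    and n :: nat and t :: "nat \<Rightarrow> 'r" and L :: "nat \<Rightarrow> nat \<Rightarrow> nat \<Rightarrow> 'r"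
    and sigma :: "'r \<Rightarrow> nat set \<Rightarrow> 'r"
    and h :: "(nat set \<Rightarrow> 'r) \<Rightarrow> (nat set \<Rightarrow> 'r)"
  assumes mf: "is_mf r par (phi W) D"
    and lam_odd: "\<forall>j<n. odd_matrix r par (L j)"
    and lam_htpy: "\<forall>j<n. \<forall>a<r. \<forall>b<r.
          (\<Sum>k<r. L j a k * D k b) + (\<Sum>k<r. D a k * L j k b) = (if a = b then t j else 0)"
    and sig_kos: "\<forall>a. sigma a \<in> kos n \<and> homog 0 (sigma a)"
    and sig_wd: "\<forall>a b. in_tideal t n (a - b) \<longrightarrow> sigma a = sigma b"
    and sig_add: "\<forall>a b. sigma (a + b) = (\<lambda>B. sigma a B + sigma b B)"
    and sig_S: "\<forall>s a. sigma (phi s * a) = (\<lambda>B. phi s * sigma a B)"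
    and sig_chain: "\<forall>a. kdelta t n (sigma a) = (\<lambda>_. 0)"
    and h_kos: "\<forall>k\<in>kos n. h k \<in> kos n"
    and h_deg: "\<forall>p. \<forall>k\<in>kos n. homog p k \<longrightarrow> homog (p + 1) (h k)"
    and h_add: "\<forall>k1\<in>kos n. \<forall>k2\<in>kos n. h (\<lambda>B. k1 B + k2 B) = (\<lambda>B. h k1 B + h k2 B)"
    and h_S: "\<forall>s. \<forall>k\<in>kos n. h (\<lambda>B. phi s * k B) = (\<lambda>B. phi s * h k B)"
    and pi_sig: "\<forall>a. in_tideal t n (sigma a {} - a)"
    and sig_pi: "\<forall>k\<in>kos n. sigma (k {}) = (\<lambda>B. k B + kdelta t n (h k) B + h (kdelta t n k) B)"
    and hh: "\<forall>k\<in>kos n. h (h k) = (\<lambda>_. 0)"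
    and h_sig: "\<forall>a. h (sigma a) = (\<lambda>_. 0)"
    and pi_h: "\<forall>k\<in>kos n. in_tideal t n (h k {})"
begin

lemma sigma_kos [intro]: "sigma a \<in> kos n" using sig_kos by blast
lemma h_kos_closed [intro]: "k \<in> kos n \<Longrightarrow> h k \<in> kos n" using h_kos by blast

lemma h_plus: "k1 \<in> kos n \<Longrightarrow> k2 \<in> kos n \<Longrightarrow> h (k1 + k2) = h k1 + h k2"
  using h_add by (simp add: plus_fun_def)

lemma h_zero: "h (\<lambda>_. 0) = (\<lambda>_. 0)"
proof -
  have "h (\<lambda>_. 0) = h (\<lambda>_. 0) + h (\<lambda>_. 0)" using h_plus[of "\<lambda>_. 0" "\<lambda>_. 0"]
    by (simp add: plus_fun_def)
  then show ?thesis by (simp add: fun_eq_iff)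
qed

lemma h_uminus: "k \<in> kos n \<Longrightarrow> h (- k) = - h k"
  using h_plus[of k "-k"] h_zero by (simp add: kos_uminus fun_eq_iff add_eq_0_iff2 zero_fun_def)

lemma h_psign: "k \<in> kos n \<Longrightarrow> h (\<lambda>B. psign b * k B) = (\<lambda>B. psign b * h k B)"
  using h_uminus[of k] by (auto simp: psign_def fun_eq_iff fun_Compl_def)

lemma h_sum: "finite F \<Longrightarrow> (\<And>j. j \<in> F \<Longrightarrow> k j \<in> kos n) \<Longrightarrow>
   h (\<lambda>B. \<Sum>j\<in>F. k j B) = (\<lambda>B. \<Sum>j\<in>F. h (k j) B)"
proof (induction F rule: finite_induct)
  case empty then show ?case using h_zero by simp
next
  case (insert x F)
  have "(\<lambda>B. \<Sum>j\<in>F. k j B) \<in> kos n" using insert kos_sum[of F k n "\<lambda>_. 1"] by simp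
  then show ?case using insert h_add by simp
qed

abbreviation w where "w \<equiv> phi W"
abbreviation htens where "htens \<equiv> hT r par h"
abbreviation dtens where "dtens \<equiv> dT r D"

text \<open>\<open>1 \<otimes> \<delta>\<close> on \<open>X \<otimes> K(t)\<close>, with the Koszul sign \<open>(-1)\<^sup>|\<^sup>\<xi>\<^sub>i\<^sup>|\<close>, and \<open>\<sigma>\<pi>\<close> on \<open>X \<otimes> K(t)\<close>.\<close>
definition deltens :: "(nat \<Rightarrow> nat set \<Rightarrow> 'r) \<Rightarrow> nat \<Rightarrow> nat set \<Rightarrow> 'r" where
  "deltens z = (\<lambda>i B. if i < r then psign (par i) * kdelta t n (z i) B else 0)"
definition sigpi :: "(nat \<Rightarrow> nat set \<Rightarrow> 'r) \<Rightarrow> nat \<Rightarrow> nat set \<Rightarrow> 'r" where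
  "sigpi z = sigT r sigma (\<lambda>i. z i {})"
definition tensors :: "(nat \<Rightarrow> nat set \<Rightarrow> 'r) set" where
  "tensors = {z. (\<forall>i. z i \<in> kos n) \<and> (\<forall>i\<ge>r. z i = 0)}"

lemma htens_eq: "htens z = (\<lambda>i B. if i < r then psign (par i) * h (z i) B else 0)"
  unfolding hT_def psign_def by (simp add: fun_eq_iff)

lemma tensorsD: "z \<in> tensors \<Longrightarrow> z i \<in> kos n" "z \<in> tensors \<Longrightarrow> \<not> i < r \<Longrightarrow> z i B = 0"
  by (auto simp: tensors_def)

lemma tensorsI: "(\<And>i. z i \<in> kos n) \<Longrightarrow> (\<And>i B. \<not> i < r \<Longrightarrow> z i B = 0) \<Longrightarrow> z \<in> tensors"
  by (auto simp: tensors_def fun_eq_iff)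

lemma D_odd: "odd_matrix r par D" using mf by (simp add: is_mf_def)
lemma D_nonzero_parity: "i < r \<Longrightarrow> j < r \<Longrightarrow> D i j \<noteq> 0 \<Longrightarrow> par j = (\<not> par i)"
  using D_odd by (auto simp: odd_matrix_def)

lemma htens_closed: "z \<in> tensors \<Longrightarrow> htens z \<in> tensors"
  using h_kos by (auto simp: tensors_def htens_eq kos_def)
lemma dtens_closed: "z \<in> tensors \<Longrightarrow> dtens z \<in> tensors"
  by (auto simp: tensors_def dT_def kos_def)
lemma deltens_closed: "deltens z \<in> tensors"
  by (auto simp: tensors_def deltens_def kdelta_def kos_def)
lemma sigpi_closed: "sigpi z \<in> tensors"
  using sig_kos by (auto simp: tensors_def sigpi_def sigT_def kos_def)

lemma tensors_zero: "0 \<in> tensors" by (rule tensorsI) auto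
lemma tensors_add: "x \<in> tensors \<Longrightarrow> y \<in> tensors \<Longrightarrow> x + y \<in> tensors"
  unfolding tensors_def by (auto intro: kos_plus)
lemma tensors_uminus: "x \<in> tensors \<Longrightarrow> - x \<in> tensors"
  unfolding tensors_def by (auto intro: kos_uminus)

lemma htens_add: "x \<in> tensors \<Longrightarrow> y \<in> tensors \<Longrightarrow> htens (x + y) = htens x + htens y"
  by (auto simp: htens_eq h_plus tensorsD algebra_simps intro!: ext)
lemma dtens_add: "x \<in> tensors \<Longrightarrow> y \<in> tensors \<Longrightarrow> dtens (x + y) = dtens x + dtens y"
  by (auto simp: dT_def sum.distrib algebra_simps intro!: ext)
lemma deltens_add: "x \<in> tensors \<Longrightarrow> y \<in> tensors \<Longrightarrow> deltens (x + y) = deltens x + deltens y"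
  by (auto simp: deltens_def kdelta_plus algebra_simps intro!: ext)

lemma htens_homotopy: "z \<in> tensors \<Longrightarrow> deltens (htens z) + htens (deltens z) = sigpi z - z"
proof (rule ext, rule ext)
  fix i B assume z: "z \<in> tensors"
  show "(deltens (htens z) + htens (deltens z)) i B = (sigpi z - z) i B"
  proof (cases "i < r")
    case True
    have "(deltens (htens z) + htens (deltens z)) i B = kdelta t n (h (z i)) B + h (kdelta t n (z i)) B"
      using True by (simp add: deltens_def htens_eq kdelta_scal h_psign[OF kdelta_kos] mult.assoc[symmetric])
    also have "\<dots> = sigma (z i {}) B - z i B" using sig_pi tensorsD(1)[OF z, of i] by simp
    finally show ?thesis using True by (simp add: sigpi_def sigT_def)
  qed (simp add: deltens_def htens_eq sigpi_def sigT_def tensorsD(2)[OF z])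
qed

lemma dtens_deltens_anticommute: "z \<in> tensors \<Longrightarrow> dtens (deltens z) + deltens (dtens z) = 0"
proof (rule ext, rule ext)
  fix i B assume z: "z \<in> tensors"
  show "(dtens (deltens z) + deltens (dtens z)) i B = (0::nat \<Rightarrow> nat set \<Rightarrow> 'r) i B"
  proof (cases "i < r")
    case True
    have "deltens (dtens z) i B = psign (par i) * (\<Sum>j<r. D i j * kdelta t n (z j) B)"
      using True kdelta_sum[of t n "\<lambda>j. D i j" z "{..<r}"] by (simp add: deltens_def dT_def)
    moreover have "dtens (deltens z) i B = (\<Sum>j<r. D i j * (psign (par j) * kdelta t n (z j) B))"
      using True by (simp add: deltens_def dT_def)
    moreover have "(\<Sum>j<r. D i j * (psign (par j) * kdelta t n (z j) B)) =
        (\<Sum>j<r. - (psign (par i) * (D i j * kdelta t n (z j) B)))"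
    proof (rule sum.cong)
      fix j assume "j \<in> {..<r}"
      then show "D i j * (psign (par j) * kdelta t n (z j) B) = - (psign (par i) * (D i j * kdelta t n (z j) B))"
        using D_nonzero_parity[OF True, of j] by (cases "D i j = 0") (auto simp: psign_def)
    qed simp
    ultimately show ?thesis by (simp add: sum_negf sum_distrib_left)
  qed (simp add: deltens_def dT_def)
qed

lemma htens_htens: "z \<in> tensors \<Longrightarrow> htens (htens z) = 0"
  by (auto simp: htens_eq h_psign[OF h_kos_closed[OF tensorsD(1)]] hh tensorsD(1) intro!: ext)

lemma D_squared: "i < r \<Longrightarrow> k < r \<Longrightarrow> (\<Sum>j<r. D i j * D j k) = (if i = k then w else 0)"
  using mf by (simp add: is_mf_def)

lemma dtens_dtens: "z \<in> tensors \<Longrightarrow> dtens (dtens z) = (\<lambda>i B. w * z i B)"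
proof (rule ext, rule ext)
  fix i B assume z: "z \<in> tensors"
  show "dtens (dtens z) i B = w * z i B"
  proof (cases "i < r")
    case True
    have "dtens (dtens z) i B = (\<Sum>j<r. D i j * (\<Sum>k<r. D j k * z k B))"
      using True by (simp add: dT_def)
    also have "\<dots> = (\<Sum>k<r. (\<Sum>j<r. D i j * D j k) * z k B)"
      by (simp add: sum_distrib_left sum_distrib_right mult.assoc) (rule sum.swap)
    also have "\<dots> = (\<Sum>k<r. (if i = k then w else 0) * z k B)"
      using D_squared[OF True] by simp
    also have "\<dots> = (\<Sum>k<r. if i = k then w * z k B else 0)" by (rule sum.cong) auto
    also have "\<dots> = w * z i B" using True by simp
    finally show ?thesis .
  qed (simp add: dT_def tensorsD(2)[OF z])
qed

lemma htens_dd_commute: assumes z: "z \<in> tensors" shows "htens (dtens (dtens z)) = dtens (dtens (htens z))"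
  unfolding dtens_dtens[OF z] dtens_dtens[OF htens_closed[OF z]]
  using h_S tensorsD(1)[OF z] by (simp add: htens_eq fun_eq_iff)

lemma h_deg_supp:
  assumes k: "k \<in> kos n" and s: "deg_supp S k"
  shows "deg_supp (Suc ` S) (h k)"
proof -
  define F where "F = S \<inter> {..n}"
  define kp where "kp p = (\<lambda>B. if card B = p then k B else 0)" for p
  have kpk: "kp p \<in> kos n" for p
    by (rule kosI) (simp add: kp_def kosD[OF k])
  have kpd: "homog p (kp p)" for p by (simp add: homog_def kp_def)
  have keq: "k = (\<lambda>B. \<Sum>p\<in>F. kp p B)"
  proof
    fix B
    have "(\<Sum>p\<in>F. kp p B) = (if card B \<in> F then k B else 0)"
      unfolding kp_def by (simp add: sum.delta' F_def)
    then show "k B = (\<Sum>p\<in>F. kp p B)" using s kos_card_le[OF k, of B]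
      by (auto simp: deg_supp_def F_def)
  qed
  have "h k = (\<lambda>B. \<Sum>p\<in>F. h (kp p) B)"
    by (subst keq, rule h_sum) (auto simp: F_def kpk)
  moreover have "homog (p + 1) (h (kp p))" for p using h_deg kpk kpd by blast
  ultimately show ?thesis
    unfolding deg_supp_def
    by (auto simp: homog_def F_def elim!: sum.not_neutral_contains_not_neutral)
qed

lemma htens_deg_supp:
  assumes z: "z \<in> tensors" and s: "\<And>i. deg_supp S (z i)" shows "deg_supp (Suc ` S) (htens z i)"
proof -
  have "deg_supp (Suc ` S) (h (z i))" by (rule h_deg_supp[OF tensorsD(1)[OF z] s])
  then show ?thesis unfolding deg_supp_def htens_eq by (simp add: psign_def)
qed

lemma dtens_deg_supp: assumes s: "\<And>i. deg_supp S (z i)" shows "deg_supp S (dtens z i)"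
  unfolding deg_supp_def
proof (intro allI impI)
  fix B assume "dtens z i B \<noteq> 0"
  then obtain j where "z j B \<noteq> 0"
    by (auto simp: dT_def split: if_splits elim!: sum.not_neutral_contains_not_neutral) (metis mult_zero_right)
  then show "card B \<in> S" using s[of j] by (simp add: deg_supp_def)
qed

lemma hd_pow_closed: "z \<in> tensors \<Longrightarrow> ((htens \<circ> dtens) ^^ m) z \<in> tensors"
  by (induction m) (auto simp: htens_closed dtens_closed)

lemma hd_pow_deg_supp: assumes z: "z \<in> tensors" shows "deg_supp {m..} (((htens \<circ> dtens) ^^ m) z i)"
proof (induction m arbitrary: i)
  case 0 then show ?case by (simp add: deg_supp_def)
next
  case (Suc m)
  have "deg_supp {m..} (dtens (((htens \<circ> dtens) ^^ m) z) j)" for j by (rule dtens_deg_supp[OF Suc])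
  then have "deg_supp (Suc ` {m..}) (htens (dtens (((htens \<circ> dtens) ^^ m) z)) i)"
    by (rule htens_deg_supp[OF dtens_closed[OF hd_pow_closed[OF z]]])
  then have "deg_supp {Suc m..} (htens (dtens (((htens \<circ> dtens) ^^ m) z)) i)"
    by (rule deg_supp_mono) auto
  then show ?case by (metis comp_apply funpow.simps(2))
qed

lemma hd_nilpotent: assumes z: "z \<in> tensors" shows "((htens \<circ> dtens) ^^ Suc n) z = 0"
proof (rule ext)
  fix i show "((htens \<circ> dtens) ^^ Suc n) z i = 0 i"
    using deg_supp_above_zero[OF tensorsD(1)[OF hd_pow_closed[OF z]] hd_pow_deg_supp[OF z]] by simp
qed

sublocale pert: nilpotent_perturbation tensors htens dtens deltens sigpi n
  by unfold_locales
    (auto simp: tensors_zero tensors_add tensors_uminus htens_closed dtens_closed deltens_closed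
      sigpi_closed htens_add dtens_add deltens_add htens_homotopy dtens_deltens_anticommute htens_htens htens_dd_commute hd_nilpotent[simplified])

subsection \<open>Products of the \<open>\<lambda>\<^sub>j\<close> and the lift of \<open>\<theta>\<close>\<close>

lemma lam_d_homotopy:
  assumes k: "k < n" and x: "x \<in> vecs r"
  shows "mv r D (mv r (L k) x) = (\<lambda>i. t k * x i) - mv r (L k) (mv r D x)"
proof (rule ext)
  fix i show "mv r D (mv r (L k) x) i = ((\<lambda>i. t k * x i) - mv r (L k) (mv r D x)) i"
  proof (cases "i < r")
    case True
    have sw: "\<And>M1 M2. (\<Sum>j<r. M1 j * (\<Sum>b<r. M2 j b * x b)) = (\<Sum>b<r. (\<Sum>j<r. M1 j * M2 j b) * x b)"
      by (simp add: sum_distrib_left sum_distrib_right mult.assoc) (rule sum.swap)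
    have "mv r D (mv r (L k) x) i + mv r (L k) (mv r D x) i
        = (\<Sum>j<r. D i j * (\<Sum>b<r. L k j b * x b)) + (\<Sum>j<r. L k i j * (\<Sum>b<r. D j b * x b))"
      using True by (simp add: mv_def)
    also have "\<dots> = (\<Sum>b<r. ((\<Sum>j<r. L k i j * D j b) + (\<Sum>j<r. D i j * L k j b)) * x b)"
      by (simp add: sw distrib_right sum.distrib)
    also have "\<dots> = (\<Sum>b<r. (if i = b then t k else 0) * x b)"
      using lam_htpy k True by simp
    also have "\<dots> = (\<Sum>b<r. if i = b then t k * x b else 0)" by (rule sum.cong) auto
    also have "\<dots> = t k * x i" using True by simp
    finally show ?thesis by (simp add: algebra_simps)
  qed (simp add: mv_def vecsD[OF x])
qed

text \<open>\<open>lamprod_on C k\<close> is the product of the \<open>\<lambda>\<^sub>j\<close> with \<open>j \<in> C\<close>, \<open>j < k\<close>, in the order of \<open>lamprod\<close>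
  (the smallest index outermost).\<close>
fun lamprod_on :: "nat set \<Rightarrow> nat \<Rightarrow> (nat \<Rightarrow> 'r) \<Rightarrow> nat \<Rightarrow> 'r" where
  "lamprod_on C 0 x = x"
| "lamprod_on C (Suc k) x = lamprod_on C k (if k \<in> C then mv r (L k) x else x)"

lemma lamprod_on_vecs: "x \<in> vecs r \<Longrightarrow> lamprod_on C k x \<in> vecs r"
  by (induction k arbitrary: x) auto
lemma lamprod_on_add: "lamprod_on C k (x + y) = lamprod_on C k x + lamprod_on C k y"
  by (induction k arbitrary: x y) (auto simp: mv_add)
lemma lamprod_on_scal: "lamprod_on C k (\<lambda>i. c * x i) = (\<lambda>i. c * lamprod_on C k x i)"
  by (induction k arbitrary: x) (auto simp: mv_scal)
lemma lamprod_on_diff: "lamprod_on C k (x - y) = lamprod_on C k x - lamprod_on C k y"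
  by (induction k arbitrary: x y) (auto simp: mv_diff)
lemma lamprod_on_cong: "C \<inter> {..<k} = C' \<inter> {..<k} \<Longrightarrow> lamprod_on C k x = lamprod_on C' k x"
proof (induction k arbitrary: x)
  case (Suc k)
  have a: "C \<inter> {..<k} = (C \<inter> {..<Suc k}) \<inter> {..<k}" "C' \<inter> {..<k} = (C' \<inter> {..<Suc k}) \<inter> {..<k}"
    by auto
  have "C \<inter> {..<k} = C' \<inter> {..<k}" unfolding a Suc.prems ..
  moreover have "(k \<in> C) = (k \<in> C')"
  proof -
    have "(k \<in> C \<inter> {..<Suc k}) = (k \<in> C' \<inter> {..<Suc k})" unfolding Suc.prems ..
    then show ?thesis by simp
  qed
  ultimately show ?case using Suc.IH by simp
qed simp
lemma lamprod_on_empty: "lamprod_on {} k x = x" by (induction k arbitrary: x) auto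

lemma lamprod_eq_lamprod_on: "lamprod r L k x = lamprod_on {..<k} k x"
proof (induction k arbitrary: x)
  case (Suc k)
  have "lamprod_on {..<Suc k} k y = lamprod_on {..<k} k y" for y by (rule lamprod_on_cong) auto
  then show ?case using Suc by simp
qed simp

lemma lamprod_on_d_lam:
  assumes k: "k \<in> C" "k < n" and x: "x \<in> vecs r"
  shows "lamprod_on C k (mv r D (mv r (L k) x))
    = (\<lambda>i. t k * lamprod_on (C - {k}) (Suc k) x i) - lamprod_on C (Suc k) (mv r D x)"
proof -
  have "lamprod_on C k (mv r D (mv r (L k) x)) = lamprod_on C k ((\<lambda>i. t k * x i) - mv r (L k) (mv r D x))"
    using lam_d_homotopy[OF k(2) x] by simp
  also have "\<dots> = (\<lambda>i. t k * lamprod_on C k x i) - lamprod_on C k (mv r (L k) (mv r D x))"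
    by (simp add: lamprod_on_diff lamprod_on_scal)
  also have "lamprod_on C k x = lamprod_on (C - {k}) (Suc k) x"
    by (simp, rule lamprod_on_cong, auto)
  also have "lamprod_on C k (mv r (L k) (mv r D x)) = lamprod_on C (Suc k) (mv r D x)" using k by simp
  finally show ?thesis .
qed

text \<open>Moving \<open>d\<close> through the \<open>\<lambda>\<^sub>j\<close>, each \<open>\<lambda>\<^sub>j d = t\<^sub>j - d \<lambda>\<^sub>j\<close> contributes a sign and a
  \<open>t\<^sub>j\<close>-multiple of the product with \<open>\<lambda>\<^sub>j\<close> omitted.\<close>
lemma d_lamprod_on:
  assumes C: "C \<subseteq> {..<n}" and x: "x \<in> vecs r"
  shows "mv r D (lamprod_on C k x)
    = (\<lambda>i. (\<Sum>j\<in>C \<inter> {..<k}. (-1) ^ card {c\<in>C. c < j} * t j * lamprod_on (C - {j}) k x i)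
          + (-1) ^ card (C \<inter> {..<k}) * lamprod_on C k (mv r D x) i)"
  using x
proof (induction k arbitrary: x)
  case 0 then show ?case by simp
next
  case (Suc k)
  show ?case
  proof (cases "k \<in> C")
    case True
    define x' where "x' = mv r (L k) x"
    have omit: "lamprod_on (C - {j}) k x' = lamprod_on (C - {j}) (Suc k) x" if "j \<in> C \<inter> {..<k}" for j
      using that True by (simp add: x'_def)
    have ins: "C \<inter> {..<Suc k} = insert k (C \<inter> {..<k})" using True by auto
    have card_k: "card {c\<in>C. c < k} = card (C \<inter> {..<k})"
      by (rule arg_cong[where f=card]) auto
    have "mv r D (lamprod_on C (Suc k) x) = mv r D (lamprod_on C k x')" using True by (simp add: x'_def)
    also have "\<dots> = (\<lambda>i. (\<Sum>j\<in>C \<inter> {..<k}. (-1) ^ card {c\<in>C. c < j} * t j * lamprod_on (C - {j}) (Suc k) x i)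
          + (-1) ^ card (C \<inter> {..<k}) * (t k * lamprod_on (C - {k}) (Suc k) x i - lamprod_on C (Suc k) (mv r D x) i))"
    proof -
      have "x' \<in> vecs r" by (simp add: x'_def)
      moreover have "lamprod_on C k (mv r D x')
          = (\<lambda>i. t k * lamprod_on (C - {k}) (Suc k) x i) - lamprod_on C (Suc k) (mv r D x)"
        unfolding x'_def using lamprod_on_d_lam[OF True _ Suc.prems] True C by auto
      moreover have "(\<Sum>j\<in>C \<inter> {..<k}. (-1) ^ card {c\<in>C. c < j} * t j * lamprod_on (C - {j}) k x' i)
          = (\<Sum>j\<in>C \<inter> {..<k}. (-1) ^ card {c\<in>C. c < j} * t j * lamprod_on (C - {j}) (Suc k) x i)" for i
        by (rule sum.cong[OF refl]) (simp only: omit)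
      ultimately show ?thesis using Suc.IH[of x'] by (simp del: lamprod_on.simps)
    qed
    also have "\<dots> = (\<lambda>i. (\<Sum>j\<in>C \<inter> {..<Suc k}. (-1) ^ card {c\<in>C. c < j} * t j * lamprod_on (C - {j}) (Suc k) x i)
          + (-1) ^ card (C \<inter> {..<Suc k}) * lamprod_on C (Suc k) (mv r D x) i)"
      unfolding ins by (simp add: card_k[symmetric] algebra_simps del: lamprod_on.simps)
    finally show ?thesis unfolding ins .
  next
    case False
    then have "C \<inter> {..<Suc k} = C \<inter> {..<k}" by (auto simp: less_Suc_eq)
    with Suc.IH[OF Suc.prems] False show ?thesis by simp
  qed
qed

text \<open>The lift \<open>\<Phi>\<close> of \<open>\<theta>\<close>: its \<open>dt\<^sub>B\<close>-component is \<open>\<plusminus>\<lambda>\<^sub>C x\<close> for the complement \<open>C\<close> of \<open>B\<close>, so that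
  the \<open>dt\<^sub>[\<^sub>n\<^sub>]\<close>-component is \<open>x\<close> and the \<open>dt\<^sub>\<emptyset>\<close>-component is \<open>\<theta> x\<close>.\<close>
definition lift_sign :: "nat set \<Rightarrow> 'r" where
  "lift_sign B = (-1) ^ (\<Sum>B + tri (card B) + n)"
definition par_sign :: "nat \<Rightarrow> nat set \<Rightarrow> 'r" where
  "par_sign i B = (if par i then (-1) ^ card B else 1)"
definition theta_lift :: "(nat \<Rightarrow> 'r) \<Rightarrow> nat \<Rightarrow> nat set \<Rightarrow> 'r" where
  "theta_lift x = (\<lambda>i B. if i < r \<and> B \<subseteq> {..<n} then lift_sign B * par_sign i B * lamprod_on ({..<n} - B) n x i else 0)"

lemma lift_sign_top: "lift_sign {..<n} = 1"
  unfolding lift_sign_def using even_sum_lessThan_tri[of n] by (simp add: minus_one_power_iff)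

lemma lift_sign_insert:
  assumes B: "B \<subseteq> {..<n}" and j: "j < n" "j \<notin> B"
  shows "(-1) ^ card {b\<in>B. b < j} * lift_sign (insert j B)
       = - (lift_sign B * (-1) ^ card B * (-1) ^ card {c\<in>{..<n} - B. c < j})"
proof -
  have fB: "finite B" using B finite_subset by blast
  define a where "a = card {b\<in>B. b < j}"
  define c where "c = card {c\<in>{..<n} - B. c < j}"
  have ac: "a + c = j" unfolding a_def c_def by (rule card_below_split[OF B j(1)])
  have s1: "\<Sum>(insert j B) = \<Sum>B + j" using fB j by simp
  have s2: "card (insert j B) = Suc (card B)" using fB j by simp
  have "(-1) ^ a * lift_sign (insert j B) = (-1::'r) ^ (a + (\<Sum>B + j + (tri (card B) + Suc (card B)) + n))"
    unfolding lift_sign_def s1 s2 tri_Suc by (simp add: power_add)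
  also have "\<dots> = - ((-1) ^ ((\<Sum>B + tri (card B) + n) + card B + c))"
  proof (rule minus_one_power_odd_sum)
    have "a + (\<Sum>B + j + (tri (card B) + Suc (card B)) + n) + ((\<Sum>B + tri (card B) + n) + card B + c)
        = 2 * (j + \<Sum>B + tri (card B) + n + card B) + 1" using ac by simp
    then show "odd (a + (\<Sum>B + j + (tri (card B) + Suc (card B)) + n) + ((\<Sum>B + tri (card B) + n) + card B + c))"
      by presburger
  qed
  also have "\<dots> = - (lift_sign B * (-1) ^ card B * (-1) ^ c)" unfolding lift_sign_def by (simp add: power_add)
  finally show ?thesis unfolding a_def c_def .
qed

lemma theta_lift_closed: "theta_lift x \<in> tensors"
  by (rule tensorsI; (rule kosI)?; simp add: theta_lift_def)

lemma theta_lift_add: "theta_lift (x + y) = theta_lift x + theta_lift y"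
  by (simp add: theta_lift_def lamprod_on_add algebra_simps fun_eq_iff)
lemma theta_lift_scal: "theta_lift (\<lambda>i. c * x i) = (\<lambda>i B. c * theta_lift x i B)"
  by (simp add: theta_lift_def lamprod_on_scal algebra_simps fun_eq_iff)

lemma eps_theta_lift: assumes x: "x \<in> vecs r" shows "epsT r par n (theta_lift x) = x"
proof (rule ext)
  fix i show "epsT r par n (theta_lift x) i = x i"
    by (cases "i < r") (auto simp: epsT_def theta_lift_def lift_sign_top par_sign_def lamprod_on_empty vecsD[OF x]
        power_mult_distrib[symmetric] simp flip: power_add mult_2)
qed

lemma augment_theta_lift: assumes x: "x \<in> vecs r" shows "(\<lambda>i. theta_lift x i {}) = theta r n L x"
proof (rule ext)
  fix i show "theta_lift x i {} = theta r n L x i"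
    using vecsD[OF lamprod_on_vecs[OF x], of _ "{..<n}" n]
    by (cases "i < r") (auto simp: theta_def theta_lift_def lift_sign_def par_sign_def lamprod_eq_lamprod_on tri_def)
qed

lemma par_sign_insert: "finite B \<Longrightarrow> j \<notin> B \<Longrightarrow> par_sign i (insert j B) = psign (par i) * par_sign i B"
  by (auto simp: psign_def par_sign_def)

lemma deltens_theta_lift:
  assumes i: "i < r" and B: "B \<subseteq> {..<n}"
  defines "C \<equiv> {..<n} - B" and "K \<equiv> lift_sign B * (-1) ^ card B * par_sign i B"
  shows "deltens (theta_lift x) i B
    = - (K * (\<Sum>j\<in>C. (-1) ^ card {c\<in>C. c < j} * t j * lamprod_on (C - {j}) n x i))"
proof -
  have fB: "finite B" using B finite_subset by blast
  have lift_insert: "theta_lift x i (insert j B)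
      = lift_sign (insert j B) * par_sign i (insert j B) * lamprod_on (C - {j}) n x i" if "j \<in> C" for j
  proof -
    have "{..<n} - insert j B = C - {j}" unfolding C_def by auto
    with that i B show ?thesis by (simp add: theta_lift_def C_def)
  qed
  have "deltens (theta_lift x) i B
      = (\<Sum>j\<in>C. psign (par i) * ((-1) ^ card {b\<in>B. b < j} * t j * theta_lift x i (insert j B)))"
    using i B by (simp add: deltens_def kdelta_def C_def sum_distrib_left)
  also have "\<dots> = (\<Sum>j\<in>C. - (K * ((-1) ^ card {c\<in>C. c < j} * t j * lamprod_on (C - {j}) n x i)))"
  proof (rule sum.cong[OF refl])
    fix j assume j: "j \<in> C"
    then have jB: "j \<notin> B" unfolding C_def by auto
    have sign: "(-1) ^ card {b\<in>B. b < j} * lift_sign (insert j B)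
        = - (lift_sign B * (-1) ^ card B * (-1) ^ card {c\<in>C. c < j})"
      unfolding C_def by (rule lift_sign_insert[OF B]) (use j C_def in auto)
    have "psign (par i) * ((-1) ^ card {b\<in>B. b < j} * t j * theta_lift x i (insert j B))
        = par_sign i B * ((-1) ^ card {b\<in>B. b < j} * lift_sign (insert j B))
          * (t j * lamprod_on (C - {j}) n x i)"
      using j by (simp add: lift_insert par_sign_insert[OF fB jB] mult_ac)
    also have "\<dots> = - (K * ((-1) ^ card {c\<in>C. c < j} * t j * lamprod_on (C - {j}) n x i))"
      unfolding sign K_def by (simp add: mult_ac)
    finally show "psign (par i) * ((-1) ^ card {b\<in>B. b < j} * t j * theta_lift x i (insert j B))
        = - (K * ((-1) ^ card {c\<in>C. c < j} * t j * lamprod_on (C - {j}) n x i))" .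
  qed
  finally show ?thesis by (simp add: sum_negf sum_distrib_left)
qed

lemma dtens_theta_lift:
  assumes i: "i < r" and B: "B \<subseteq> {..<n}"
  defines "C \<equiv> {..<n} - B" and "K \<equiv> lift_sign B * (-1) ^ card B * par_sign i B"
  shows "dtens (theta_lift x) i B = K * mv r D (lamprod_on C n x) i"
proof -
  have "dtens (theta_lift x) i B = (\<Sum>k<r. D i k * (lift_sign B * par_sign k B * lamprod_on C n x k))"
    using i B unfolding dT_def theta_lift_def C_def by (auto intro!: sum.cong)
  also have "\<dots> = (\<Sum>k<r. K * (D i k * lamprod_on C n x k))"
  proof (rule sum.cong[OF refl])
    fix k assume k: "k \<in> {..<r}"
    show "D i k * (lift_sign B * par_sign k B * lamprod_on C n x k) = K * (D i k * lamprod_on C n x k)"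
    proof (cases "D i k = 0")
      case False
      then have "par k = (\<not> par i)" using D_nonzero_parity[OF i] k by auto
      then have "par_sign k B = (-1) ^ card B * par_sign i B"
        by (auto simp: par_sign_def simp flip: power_add mult_2)
      then show ?thesis unfolding K_def by (simp add: algebra_simps)
    qed simp
  qed
  also have "\<dots> = K * mv r D (lamprod_on C n x) i" using i by (simp add: mv_def sum_distrib_left)
  finally show ?thesis .
qed

text \<open>The Koszul terms of \<open>\<delta>\<close> cancel against the \<open>t\<^sub>j\<close>-terms of \<open>d \<lambda>\<^sub>C\<close>: this is what the
  signs in \<open>theta_lift\<close> are designed for.\<close>
lemma theta_lift_chain:
  assumes x: "x \<in> vecs r"
  shows "deltens (theta_lift x) + dtens (theta_lift x) = theta_lift (\<lambda>i. (-1) ^ n * mv r D x i)"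
proof (intro ext)
  fix i B
  show "(deltens (theta_lift x) + dtens (theta_lift x)) i B = theta_lift (\<lambda>i. (-1) ^ n * mv r D x i) i B"
  proof (cases "i < r \<and> B \<subseteq> {..<n}")
    case False
    then show ?thesis by (auto simp: deltens_def dT_def theta_lift_def kdelta_def)
  next
    case True
    then have i: "i < r" and B: "B \<subseteq> {..<n}" by auto
    define C where "C = {..<n} - B"
    define K where "K = lift_sign B * (-1) ^ card B * par_sign i B"
    have fB: "finite B" using B finite_subset by blast
    have "card B \<le> n" using card_mono[OF _ B] by simp
    then have sign: "(-1::'r) ^ card B * (-1) ^ (n - card B) = (-1) ^ n" by (simp flip: power_add)
    have "card (C \<inter> {..<n}) = n - card B" "C \<inter> {..<n} = C"
      unfolding C_def using B fB by (auto simp: card_Diff_subset Int_absorb2)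
    then have "mv r D (lamprod_on C n x) i
        = (\<Sum>j\<in>C. (-1) ^ card {c\<in>C. c < j} * t j * lamprod_on (C - {j}) n x i)
          + (-1) ^ (n - card B) * lamprod_on C n (mv r D x) i"
      using fun_cong[OF d_lamprod_on[of C x n], of i] x unfolding C_def by auto
    then have "(deltens (theta_lift x) + dtens (theta_lift x)) i B
        = K * ((-1) ^ (n - card B) * lamprod_on C n (mv r D x) i)"
      unfolding plus_fun_apply deltens_theta_lift[OF i B] dtens_theta_lift[OF i B]
        C_def[symmetric] K_def[symmetric] by (simp add: algebra_simps)
    also have "\<dots> = theta_lift (\<lambda>i. (-1) ^ n * mv r D x i) i B"
    proof -
      have "lamprod_on C n (\<lambda>i. (-1) ^ n * mv r D x i) i = (-1) ^ n * lamprod_on C n (mv r D x) i"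
        by (simp only: lamprod_on_scal)
      then show ?thesis using i B unfolding K_def theta_lift_def C_def[symmetric]
        by (simp add: mult_ac flip: sign)
    qed
    finally show ?thesis .
  qed
qed

subsection \<open>The map \<open>\<psi>\<close>\<close>

lemma sigma_zero: "sigma 0 = (\<lambda>_. 0)"
proof -
  have "sigma 0 = (\<lambda>B. sigma 0 B + sigma 0 B)" using sig_add[rule_format, of 0 0] by simp
  then show ?thesis by (simp add: fun_eq_iff)
qed

lemma sigT_closed: "sigT r sigma x \<in> tensors"
  by (rule tensorsI; (rule kosI)?; simp add: sigT_def kosD[OF sigma_kos])

lemma htens_sigT: "htens (sigT r sigma x) = 0"
  using h_sig by (simp add: htens_eq sigT_def fun_eq_iff)
lemma deltens_sigT: "deltens (sigT r sigma x) = 0"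
  using sig_chain by (simp add: deltens_def sigT_def fun_eq_iff)

lemma pert_g_eq: "pert.g = htens \<circ> dtens" by (simp add: pert.g_def)

lemma hd_pow_sigT_deg: "deg_supp {m} (((htens \<circ> dtens) ^^ m) (sigT r sigma x) i)"
proof (induction m arbitrary: i)
  case 0
  have "homog 0 (sigma a)" for a using sig_kos by blast
  then show ?case by (auto simp: deg_supp_def sigT_def homog_def)
next
  case (Suc m)
  have "deg_supp {m} (dtens (((htens \<circ> dtens) ^^ m) (sigT r sigma x)) j)" for j by (rule dtens_deg_supp[OF Suc])
  then have "deg_supp (Suc ` {m}) (htens (dtens (((htens \<circ> dtens) ^^ m) (sigT r sigma x))) i)"
    by (rule htens_deg_supp[OF dtens_closed[OF hd_pow_closed[OF sigT_closed]]])
  then have "deg_supp {Suc m} (htens (dtens (((htens \<circ> dtens) ^^ m) (sigT r sigma x))) i)" by simp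
  then show ?case by (metis comp_apply funpow.simps(2))
qed

lemma hd_pow_sigT_top: "m \<noteq> n \<Longrightarrow> ((htens \<circ> dtens) ^^ m) (sigT r sigma x) i {..<n} = 0"
  using hd_pow_sigT_deg[of m x i] by (auto simp: deg_supp_def)

lemma psi_eq_top_term: "psi r par n D h sigma x = epsT r par n (((htens \<circ> dtens) ^^ n) (sigT r sigma x))"
proof (rule ext)
  fix i
  define f where "f m = ((htens \<circ> dtens) ^^ m) (sigT r sigma x) i {..<n}" for m
  have "{m. f m \<noteq> 0} \<subseteq> {n}" using hd_pow_sigT_top unfolding f_def by blast
  then have "(\<Sum>m\<in>{m. f m \<noteq> 0}. f m) = f n"
    by (cases "f n = 0") (auto simp: subset_singleton_iff)
  then show "psi r par n D h sigma x i = epsT r par n (((htens \<circ> dtens) ^^ n) (sigT r sigma x)) i"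
    by (simp add: psi_def epsT_def sig_inf_def f_def)
qed

lemma epsT_deltens: "epsT r par n (deltens z) = 0"
  by (simp add: epsT_def deltens_def kdelta_def fun_eq_iff)

lemma epsT_dtens:
  assumes z: "z \<in> tensors"
  shows "epsT r par n (dtens z) = (\<lambda>i. (-1) ^ n * mv r D (epsT r par n z) i)"
proof (rule ext)
  fix i show "epsT r par n (dtens z) i = (-1) ^ n * mv r D (epsT r par n z) i"
  proof (cases "i < r")
    case True
    have "epsT r par n (dtens z) i = (\<Sum>j<r. (if par i then (-1) ^ n else 1) * (D i j * z j {..<n}))"
      using True by (simp add: epsT_def dT_def sum_distrib_left)
    also have "\<dots> = (\<Sum>j<r. (-1) ^ n * (D i j * ((if par j then (-1) ^ n else 1) * z j {..<n})))"
    proof (rule sum.cong[OF refl])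
      fix j assume j: "j \<in> {..<r}"
      show "(if par i then (-1) ^ n else 1) * (D i j * z j {..<n}) =
          (-1) ^ n * (D i j * ((if par j then (-1) ^ n else 1) * z j {..<n}))"
      proof (cases "D i j = 0")
        case False
        then have "par j = (\<not> par i)" using D_nonzero_parity[OF True] j by auto
        then show ?thesis by (auto simp: algebra_simps simp flip: power_add mult_2)
      qed simp
    qed
    also have "\<dots> = (-1) ^ n * mv r D (epsT r par n z) i"
      using True by (simp add: mv_def epsT_def sum_distrib_left)
    finally show ?thesis .
  qed (simp add: epsT_def dT_def mv_def)
qed

lemma epsT_neumann_sigT: "epsT r par n (pert.neumann (sigT r sigma x)) = psi r par n D h sigma x"
proof -
  have "epsT r par n (pert.neumann (sigT r sigma x)) = (\<Sum>m\<le>n. epsT r par n ((pert.g ^^ m) (sigT r sigma x)))"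
    unfolding pert.neumann_def by (simp add: epsT_sum)
  also have "\<dots> = (\<Sum>m\<le>n. if m = n then epsT r par n ((pert.g ^^ n) (sigT r sigma x)) else 0)"
  proof (rule sum.cong[OF refl])
    fix m assume "m \<in> {..n}"
    show "epsT r par n ((pert.g ^^ m) (sigT r sigma x)) =
        (if m = n then epsT r par n ((pert.g ^^ n) (sigT r sigma x)) else 0)"
      using hd_pow_sigT_top[of m x] by (auto simp: epsT_def pert_g_eq fun_eq_iff)
  qed
  also have "\<dots> = psi r par n D h sigma x" by (simp add: psi_eq_top_term pert_g_eq)
  finally show ?thesis .
qed

lemma htens_augment_tideal: "z \<in> tensors \<Longrightarrow> in_tideal t n (htens z j {})"
  using pi_h tensorsD(1) by (auto simp: htens_eq psign_def tideal_zero intro: tideal_uminus)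

lemma neumann_htens_augment_tideal:
  assumes y: "y \<in> tensors" shows "in_tideal t n (pert.neumann (htens y) j {})"
proof -
  have "pert.neumann (htens y) = htens y + htens (dtens (pert.neumann (htens y)))"
    using pert.neumann_unfold[OF htens_closed[OF y]] by (simp add: pert_g_eq)
  then have "pert.neumann (htens y) j {} = htens y j {} + htens (dtens (pert.neumann (htens y))) j {}"
    by (metis plus_fun_apply)
  moreover have "dtens (pert.neumann (htens y)) \<in> tensors"
    by (simp add: dtens_closed pert.neumann_closed htens_closed y)
  ultimately show ?thesis using htens_augment_tideal y by (simp add: tideal_add)
qed

lemma sigT_wd: "(\<And>i. i < r \<Longrightarrow> in_tideal t n (x i - y i)) \<Longrightarrow> sigT r sigma x = sigT r sigma y"
  using sig_wd by (auto simp: sigT_def fun_eq_iff)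

text \<open>The perturbed homotopy \<open>\<Sum>\<^sub>m (hd)\<^sup>m h\<close> of \<open>X \<otimes> K(t)\<close>, transported to \<open>X[n]\<close> along \<open>\<Phi>\<close>
  and \<open>\<epsilon>\<close>.\<close>
definition htpy :: "(nat \<Rightarrow> 'r) \<Rightarrow> nat \<Rightarrow> 'r" where
  "htpy x = epsT r par n (pert.neumann (htens (theta_lift x)))"

lemma psi_theta_homotopy:
  assumes x: "x \<in> vecs r"
  shows "(\<lambda>i. psi r par n D h sigma (theta r n L x) i - x i)
         = (\<lambda>i. (-1) ^ n * mv r D (htpy x) i + htpy (\<lambda>j. (-1) ^ n * mv r D x j) i)"
proof -
  define z where "z = theta_lift x"
  define u where "u = pert.neumann (htens z)"
  define b where "b = z + dtens u"
  have zT: "z \<in> tensors" by (simp add: z_def theta_lift_closed)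
  have uT: "u \<in> tensors" by (simp add: u_def pert.neumann_closed htens_closed zT)
  have perturbed: "deltens u + dtens u + pert.neumann (htens (deltens z)) + pert.neumann (htens (dtens z))
      = pert.neumann (sigpi b) - z"
    unfolding u_def b_def by (rule pert.neumann_homotopy_identity[OF zT])
  have sigpi_b: "sigpi b = sigT r sigma (theta r n L x)"
    unfolding sigpi_def
  proof (rule sigT_wd)
    fix i assume i: "i < r"
    have "b i {} = theta r n L x i + mv r D (\<lambda>j. u j {}) i"
      using i fun_cong[OF augment_theta_lift[OF x], of i] tensorsD(2)[OF uT]
      by (simp add: b_def z_def dT_def mv_def)
    moreover have "in_tideal t n (mv r D (\<lambda>j. u j {}) i)"
      by (rule tideal_mv) (simp add: u_def neumann_htens_augment_tideal zT)
    ultimately show "in_tideal t n (b i {} - theta r n L x i)" by simp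
  qed
  have chain: "pert.neumann (htens (deltens z)) + pert.neumann (htens (dtens z))
      = pert.neumann (htens (theta_lift (\<lambda>i. (-1) ^ n * mv r D x i)))"
    using pert.neumann_add[OF htens_closed[OF deltens_closed[of z]] htens_closed[OF dtens_closed[OF zT]]]
      htens_add[OF deltens_closed[of z] dtens_closed[OF zT]] theta_lift_chain[OF x] by (simp add: z_def)
  have "epsT r par n (deltens u + dtens u + pert.neumann (htens (deltens z)) + pert.neumann (htens (dtens z)))
      = (\<lambda>i. (-1) ^ n * mv r D (htpy x) i) + htpy (\<lambda>j. (-1) ^ n * mv r D x j)"
    unfolding add.assoc[of "deltens u + dtens u"] chain epsT_add epsT_deltens epsT_dtens[OF uT]
    by (simp add: htpy_def u_def z_def)
  moreover have "epsT r par n (pert.neumann (sigpi b) - z) = psi r par n D h sigma (theta r n L x) - x"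
    unfolding epsT_diff sigpi_b epsT_neumann_sigT z_def eps_theta_lift[OF x] ..
  ultimately show ?thesis using perturbed by (simp add: fun_eq_iff)
qed

subsection \<open>Parity and linearity of the homotopies\<close>

text \<open>\<open>True\<close> stands for odd; \<open>\<xi>\<^sub>i \<otimes> dt\<^sub>B\<close> has parity \<open>par i + |B|\<close>.\<close>
definition vparity :: "bool \<Rightarrow> (nat \<Rightarrow> 'r) \<Rightarrow> bool" where
  "vparity q x \<longleftrightarrow> (\<forall>i. x i \<noteq> 0 \<longrightarrow> par i = q)"
definition tparity :: "bool \<Rightarrow> (nat \<Rightarrow> nat set \<Rightarrow> 'r) \<Rightarrow> bool" where
  "tparity q z \<longleftrightarrow> (\<forall>i B. z i B \<noteq> 0 \<longrightarrow> (par i \<noteq> odd (card B)) = q)"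

lemma tparity_htens:
  assumes z: "z \<in> tensors" and q: "tparity q z" shows "tparity (\<not> q) (htens z)"
  unfolding tparity_def
proof (intro allI impI)
  fix i B assume nz: "htens z i B \<noteq> 0"
  then have i: "i < r" and hz: "h (z i) B \<noteq> 0" by (auto simp: htens_eq split: if_splits)
  have "deg_supp {p. odd p = (par i \<noteq> q)} (z i)" using q by (auto simp: tparity_def deg_supp_def)
  from h_deg_supp[OF tensorsD(1)[OF z] this] hz have "card B \<in> Suc ` {p. odd p = (par i \<noteq> q)}"
    by (simp add: deg_supp_def)
  then show "(par i \<noteq> odd (card B)) = (\<not> q)" by auto
qed

lemma tparity_dtens:
  assumes q: "tparity q z" shows "tparity (\<not> q) (dtens z)"
  unfolding tparity_def
proof (intro allI impI)
  fix i B assume nz: "dtens z i B \<noteq> 0"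
  then have i: "i < r" by (auto simp: dT_def split: if_splits)
  from nz i obtain j where j: "j < r" "D i j * z j B \<noteq> 0"
    by (auto simp: dT_def elim!: sum.not_neutral_contains_not_neutral)
  then have "D i j \<noteq> 0" "z j B \<noteq> 0" by auto
  then have "par j = (\<not> par i)" "(par j \<noteq> odd (card B)) = q"
    using D_nonzero_parity[OF i j(1)] q by (auto simp: tparity_def)
  then show "(par i \<noteq> odd (card B)) = (\<not> q)" by auto
qed

lemma tparity_hd_pow: "z \<in> tensors \<Longrightarrow> tparity q z \<Longrightarrow> tparity q ((pert.g ^^ m) z)"
proof (induction m)
  case (Suc m)
  have "tparity (\<not> \<not> q) (htens (dtens ((pert.g ^^ m) z)))"
    by (rule tparity_htens[OF dtens_closed[OF pert.g_pow_closed[OF Suc.prems(1)]]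
          tparity_dtens[OF Suc.IH[OF Suc.prems]]])
  then show ?case by (metis comp_apply funpow.simps(2) pert_g_eq)
qed simp

lemma tparity_sum: "(\<And>m. m \<in> F \<Longrightarrow> tparity q (z m)) \<Longrightarrow> tparity q (\<Sum>m\<in>F. z m)"
  unfolding tparity_def
  by (auto simp: sum_fun_apply elim!: sum.not_neutral_contains_not_neutral)

lemma tparity_neumann: "z \<in> tensors \<Longrightarrow> tparity q z \<Longrightarrow> tparity q (pert.neumann z)"
  unfolding pert.neumann_def by (rule tparity_sum) (rule tparity_hd_pow)

lemma vparity_epsT: assumes q: "tparity q z" shows "vparity (q \<noteq> odd n) (epsT r par n z)"
  unfolding vparity_def
proof (intro allI impI)
  fix i assume "epsT r par n z i \<noteq> 0"
  then have "z i {..<n} \<noteq> 0" by (auto simp: epsT_def split: if_splits)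
  then have "(par i \<noteq> odd (card {..<n})) = q" using q unfolding tparity_def by blast
  then show "par i = (q \<noteq> odd n)" by auto
qed

lemma vparity_mv: "odd_matrix r par M \<Longrightarrow> vparity q x \<Longrightarrow> vparity (\<not> q) (mv r M x)"
  unfolding vparity_def
proof (intro allI impI)
  fix i assume M: "odd_matrix r par M" and x: "\<forall>i. x i \<noteq> 0 \<longrightarrow> par i = q" and nz: "mv r M x i \<noteq> 0"
  then have i: "i < r" by (auto simp: mv_def split: if_splits)
  from nz i obtain j where j: "j < r" "M i j * x j \<noteq> 0"
    by (auto simp: mv_def elim!: sum.not_neutral_contains_not_neutral)
  then have "M i j \<noteq> 0" "x j \<noteq> 0" by auto
  then show "par i = (\<not> q)" using M x i j(1) by (auto simp: odd_matrix_def)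
qed

lemma vparity_lamprod_on:
  "C \<subseteq> {..<n} \<Longrightarrow> vparity q x \<Longrightarrow> vparity (q \<noteq> odd (card (C \<inter> {..<k}))) (lamprod_on C k x)"
proof (induction k arbitrary: q x)
  case 0 then show ?case by simp
next
  case (Suc k)
  show ?case
  proof (cases "k \<in> C")
    case True
    have kn: "k < n" using True Suc.prems by auto
    have "vparity (\<not> q) (mv r (L k) x)" using vparity_mv lam_odd kn Suc.prems(2) by blast
    from Suc.IH[OF Suc.prems(1) this]
    have "vparity ((\<not> q) \<noteq> odd (card (C \<inter> {..<k}))) (lamprod_on C (Suc k) x)" using True by simp
    moreover have "card (C \<inter> {..<Suc k}) = Suc (card (C \<inter> {..<k}))"
    proof -
      have "C \<inter> {..<Suc k} = insert k (C \<inter> {..<k})" using True by auto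
      then show ?thesis by simp
    qed
    ultimately show ?thesis by simp
  next
    case False
    have "C \<inter> {..<Suc k} = C \<inter> {..<k}" using False by (auto simp: less_Suc_eq)
    then show ?thesis using Suc False by simp
  qed
qed

lemma vparity_theta: "vparity q x \<Longrightarrow> vparity (q \<noteq> odd n) (theta r n L x)"
  using vparity_lamprod_on[of "{..<n}" q x n] by (auto simp: theta_def lamprod_eq_lamprod_on vparity_def)

lemma tparity_theta_lift: assumes x: "vparity q x" shows "tparity (q \<noteq> odd n) (theta_lift x)"
  unfolding tparity_def
proof (intro allI impI)
  fix i B assume nz: "theta_lift x i B \<noteq> 0"
  then have B: "B \<subseteq> {..<n}" and l: "lamprod_on ({..<n} - B) n x i \<noteq> 0"
    by (auto simp: theta_lift_def split: if_splits)
  have fB: "finite B" using B finite_subset by blast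
  have m: "card B \<le> n" using card_mono[OF _ B] by simp
  have "vparity (q \<noteq> odd (card (({..<n} - B) \<inter> {..<n}))) (lamprod_on ({..<n} - B) n x)"
    by (rule vparity_lamprod_on[OF _ x]) auto
  moreover have "card (({..<n} - B) \<inter> {..<n}) = n - card B"
  proof -
    have "({..<n} - B) \<inter> {..<n} = {..<n} - B" by auto
    then show ?thesis using B fB by (simp add: card_Diff_subset)
  qed
  ultimately have "par i = (q \<noteq> odd (n - card B))" using l by (simp add: vparity_def)
  moreover have "odd n = (odd (n - card B) \<noteq> odd (card B))"
    using m by (metis le_add_diff_inverse2 odd_add)
  ultimately show "(par i \<noteq> odd (card B)) = (q \<noteq> odd n)" by auto
qed

lemma tparity_sigT: "vparity q x \<Longrightarrow> tparity q (sigT r sigma x)"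
proof -
  assume x: "vparity q x"
  have "homog 0 (sigma a)" for a using sig_kos by blast
  show ?thesis unfolding tparity_def
  proof (intro allI impI)
    fix i B assume nz: "sigT r sigma x i B \<noteq> 0"
    then have s: "sigma (x i) B \<noteq> 0" by (auto simp: sigT_def split: if_splits)
    then have "x i \<noteq> 0" using sigma_zero by auto
    then have "par i = q" using x by (simp add: vparity_def)
    moreover have "card B = 0" using s \<open>\<And>a. homog 0 (sigma a)\<close> by (auto simp: homog_def)
    ultimately show "(par i \<noteq> odd (card B)) = q" by simp
  qed
qed

lemma vparity_psi: "vparity q x \<Longrightarrow> vparity (q \<noteq> odd n) (psi r par n D h sigma x)"
  unfolding epsT_neumann_sigT[symmetric] by (rule vparity_epsT, rule tparity_neumann[OF sigT_closed], erule tparity_sigT)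

lemma vparity_htpy: "vparity q x \<Longrightarrow> vparity (\<not> q) (htpy x)"
proof -
  assume x: "vparity q x"
  have "tparity (\<not> (q \<noteq> odd n)) (htens (theta_lift x))"
    by (rule tparity_htens[OF theta_lift_closed tparity_theta_lift[OF x]])
  then have "tparity (\<not> (q \<noteq> odd n)) (pert.neumann (htens (theta_lift x)))"
    by (rule tparity_neumann[OF htens_closed[OF theta_lift_closed]])
  from vparity_epsT[OF this] show ?thesis unfolding htpy_def by (cases q) auto
qed

lemma even_vec_iff_vparity: "x \<in> vecs r \<Longrightarrow> even_vec r par x = vparity False x"
  by (auto simp: even_vec_def vparity_def vecs_def) (metis not_le)
lemma odd_vec_iff_vparity: "x \<in> vecs r \<Longrightarrow> odd_vec r par x = vparity True x"
  by (auto simp: odd_vec_def vparity_def vecs_def) (metis not_le)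

lemma odd_SmapI:
  assumes "\<And>x. x \<in> vecs r \<Longrightarrow> H x \<in> vecs r"
    and "\<And>x y. x \<in> vecs r \<Longrightarrow> y \<in> vecs r \<Longrightarrow> H (\<lambda>i. x i + y i) = (\<lambda>i. H x i + H y i)"
    and "\<And>s x. x \<in> vecs r \<Longrightarrow> H (\<lambda>i. phi s * x i) = (\<lambda>i. phi s * H x i)"
    and "\<And>q x. vparity q x \<Longrightarrow> vparity (\<not> q) (H x)"
  shows "odd_Smap phi r par H"
  unfolding odd_Smap_def
proof (intro conjI ballI allI impI)
  fix x :: "nat \<Rightarrow> 'r" assume x: "x \<in> vecs r"
  note parity = even_vec_iff_vparity[OF x] odd_vec_iff_vparity[OF x]
    even_vec_iff_vparity[OF assms(1)[OF x]] odd_vec_iff_vparity[OF assms(1)[OF x]]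
  show "even_vec r par x \<Longrightarrow> odd_vec r par (H x)" using assms(4)[of False x] parity by simp
  show "odd_vec r par x \<Longrightarrow> even_vec r par (H x)" using assms(4)[of True x] parity by simp
qed (use assms in auto)

lemma odd_Smap_quotI:
  assumes "\<And>x. x \<in> vecs r \<Longrightarrow> H x \<in> vecs r"
    and "\<And>x y. x \<in> vecs r \<Longrightarrow> y \<in> vecs r \<Longrightarrow> qeq t n x y \<Longrightarrow> qeq t n (H x) (H y)"
    and "\<And>x y. x \<in> vecs r \<Longrightarrow> y \<in> vecs r \<Longrightarrow> qeq t n (H (\<lambda>i. x i + y i)) (\<lambda>i. H x i + H y i)"
    and "\<And>s x. x \<in> vecs r \<Longrightarrow> qeq t n (H (\<lambda>i. phi s * x i)) (\<lambda>i. phi s * H x i)"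
    and "\<And>q x. vparity q x \<Longrightarrow> vparity (\<not> q) (H x)"
  shows "odd_Smap_quot phi t n r par H"
  unfolding odd_Smap_quot_def
proof (intro conjI ballI allI impI)
  fix x :: "nat \<Rightarrow> 'r" assume x: "x \<in> vecs r"
  note parity = even_vec_iff_vparity[OF x] odd_vec_iff_vparity[OF x]
    even_vec_iff_vparity[OF assms(1)[OF x]] odd_vec_iff_vparity[OF assms(1)[OF x]]
  show "even_vec r par x \<Longrightarrow> \<exists>y. qeq t n (H x) y \<and> odd_vec r par y"
    using assms(5)[of False x] parity qeq_refl by auto
  show "odd_vec r par x \<Longrightarrow> \<exists>y. qeq t n (H x) y \<and> even_vec r par y"
    using assms(5)[of True x] parity qeq_refl by auto
qed (use assms in auto)

definition tscale :: "'r \<Rightarrow> (nat \<Rightarrow> nat set \<Rightarrow> 'r) \<Rightarrow> nat \<Rightarrow> nat set \<Rightarrow> 'r" where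
  "tscale c z = (\<lambda>i B. c * z i B)"

lemma tscale_closed: "z \<in> tensors \<Longrightarrow> tscale c z \<in> tensors"
  by (auto simp: tscale_def tensors_def kos_def)
lemma tscale_add: "tscale c (x + y) = tscale c x + tscale c y"
  by (simp add: tscale_def fun_eq_iff algebra_simps)
lemma htens_tscale: assumes z: "z \<in> tensors" shows "htens (tscale (phi s) z) = tscale (phi s) (htens z)"
proof -
  have "h (\<lambda>B. phi s * z i B) = (\<lambda>B. phi s * h (z i) B)" for i using h_S tensorsD(1)[OF z] by blast
  then show ?thesis by (simp add: tscale_def htens_eq fun_eq_iff)
qed
lemma dtens_tscale: "dtens (tscale c z) = tscale c (dtens z)"
  by (simp add: tscale_def dT_def fun_eq_iff sum_distrib_left algebra_simps)
lemma neumann_tscale: "y \<in> tensors \<Longrightarrow> pert.neumann (tscale (phi s) y) = tscale (phi s) (pert.neumann y)"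
  by (rule pert.neumann_commute[symmetric]; (simp only: tscale_add)?; auto simp: tscale_closed htens_tscale dtens_tscale)

lemma htpy_vecs: "htpy x \<in> vecs r" by (simp add: htpy_def epsT_vecs)
lemma psi_vecs: "psi r par n D h sigma x \<in> vecs r" by (simp add: psi_eq_top_term epsT_vecs)
lemma theta_vecs: "x \<in> vecs r \<Longrightarrow> theta r n L x \<in> vecs r"
  using lamprod_on_vecs[of x "{..<n}" n] by (simp add: theta_def lamprod_eq_lamprod_on vecs_def)

lemma htpy_add: "htpy (\<lambda>i. x i + y i) = (\<lambda>i. htpy x i + htpy y i)"
proof -
  have eq: "(\<lambda>i. x i + y i) = x + y" by (simp add: fun_eq_iff)
  show ?thesis
    unfolding htpy_def eq theta_lift_add htens_add[OF theta_lift_closed theta_lift_closed]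
      pert.neumann_add[OF htens_closed[OF theta_lift_closed] htens_closed[OF theta_lift_closed]] epsT_add
    by (simp add: plus_fun_def)
qed

lemma htpy_scal: "htpy (\<lambda>i. phi s * x i) = (\<lambda>i. phi s * htpy x i)"
proof -
  have "theta_lift (\<lambda>i. phi s * x i) = tscale (phi s) (theta_lift x)" by (simp add: theta_lift_scal tscale_def)
  then show ?thesis
    by (simp add: htpy_def htens_tscale theta_lift_closed neumann_tscale htens_closed) (simp add: tscale_def epsT_scal)
qed

lemma sigT_add: "sigT r sigma (\<lambda>i. x i + y i) = sigT r sigma x + sigT r sigma y"
  using sig_add by (simp add: sigT_def fun_eq_iff)
lemma sigT_scal: "sigT r sigma (\<lambda>i. phi s * x i) = tscale (phi s) (sigT r sigma x)"
  using sig_S by (simp add: sigT_def tscale_def fun_eq_iff)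

lemma psi_add: "psi r par n D h sigma (\<lambda>i. x i + y i)
    = (\<lambda>i. psi r par n D h sigma x i + psi r par n D h sigma y i)"
  unfolding epsT_neumann_sigT[symmetric] sigT_add pert.neumann_add[OF sigT_closed sigT_closed] epsT_add by (simp add: plus_fun_def)

lemma psi_scal: "psi r par n D h sigma (\<lambda>i. phi s * x i) = (\<lambda>i. phi s * psi r par n D h sigma x i)"
  unfolding epsT_neumann_sigT[symmetric] sigT_scal neumann_tscale[OF sigT_closed] by (simp add: tscale_def epsT_scal)

lemma psi_wd: "qeq t n x y \<Longrightarrow> psi r par n D h sigma x = psi r par n D h sigma y"
  unfolding psi_eq_top_term by (metis sigT_wd qeq_def)

lemma theta_eq_lamprod_on: "theta r n L x = (\<lambda>i. (-1) ^ n * lamprod_on {..<n} n x i)"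
  by (simp add: theta_def lamprod_eq_lamprod_on)

lemma theta_add: "theta r n L (\<lambda>i. x i + y i) = (\<lambda>i. theta r n L x i + theta r n L y i)"
proof -
  have "(\<lambda>i. x i + y i) = x + y" by (simp add: fun_eq_iff)
  then show ?thesis by (simp add: theta_eq_lamprod_on lamprod_on_add algebra_simps)
qed
lemma theta_diff: "theta r n L (x - y) = theta r n L x - theta r n L y"
  by (simp add: theta_eq_lamprod_on lamprod_on_diff algebra_simps fun_eq_iff)
lemma theta_scal: "theta r n L (\<lambda>i. c * x i) = (\<lambda>i. c * theta r n L x i)"
  by (simp add: theta_eq_lamprod_on lamprod_on_scal algebra_simps)
lemma theta_plus: "theta r n L (x + y) = theta r n L x + theta r n L y"
  by (simp add: theta_eq_lamprod_on lamprod_on_add algebra_simps fun_eq_iff)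

lemma theta_chain_mod_tideal:
  assumes z: "z \<in> vecs r"
  shows "qeq t n (theta r n L (\<lambda>i. (-1) ^ n * mv r D z i)) (mv r D (theta r n L z))"
  unfolding qeq_def
proof
  fix i
  have d_lamprod: "mv r D (lamprod_on {..<n} n z) i = (\<Sum>j\<in>{..<n}. (-1) ^ card {c\<in>{..<n}. c < j} * t j * lamprod_on ({..<n} - {j}) n z i)
          + (-1) ^ n * lamprod_on {..<n} n (mv r D z) i"
    using fun_cong[OF d_lamprod_on[OF order_refl z, of n], of i] by simp
  have a: "theta r n L (\<lambda>i. (-1) ^ n * mv r D z i) i = lamprod_on {..<n} n (mv r D z) i"
    by (simp add: theta_eq_lamprod_on lamprod_on_scal flip: power_add mult_2)
  have b: "mv r D (theta r n L z) i = (-1) ^ n * mv r D (lamprod_on {..<n} n z) i"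
    by (simp add: theta_eq_lamprod_on mv_scal)
  have "in_tideal t n ((\<Sum>j\<in>{..<n}. (-1) ^ card {c\<in>{..<n}. c < j} * t j * lamprod_on ({..<n} - {j}) n z i))"
  proof (rule tideal_sum)
    fix j assume j: "j \<in> {..<n}"
    have "in_tideal t n (((-1) ^ card {c\<in>{..<n}. c < j} * lamprod_on ({..<n} - {j}) n z i) * t j)"
      using j by (intro tideal_mult tideal_gen) simp
    then show "in_tideal t n ((-1) ^ card {c\<in>{..<n}. c < j} * t j * lamprod_on ({..<n} - {j}) n z i)"
      by (simp add: mult_ac)
  qed
  then have "in_tideal t n (- ((-1) ^ n * (\<Sum>j\<in>{..<n}. (-1) ^ card {c\<in>{..<n}. c < j} * t j * lamprod_on ({..<n} - {j}) n z i)))"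
    by (intro tideal_uminus tideal_mult)
  then show "in_tideal t n (theta r n L (\<lambda>i. (-1) ^ n * mv r D z i) i - mv r D (theta r n L z) i)"
    unfolding a b d_lamprod by (simp add: algebra_simps flip: power_add mult_2)
qed

lemma neumann_sigT_augment_tideal:
  assumes x: "x \<in> vecs r"
  shows "in_tideal t n (pert.neumann (sigT r sigma x) j {} - x j)"
proof (cases "j < r")
  case True
  define v where "v = pert.neumann (sigT r sigma x)"
  have "v \<in> tensors" by (simp add: v_def pert.neumann_closed sigT_closed)
  have "v = sigT r sigma x + htens (dtens v)"
    unfolding v_def using pert.neumann_unfold[OF sigT_closed] by (simp add: pert_g_eq)
  then have "v j {} = sigT r sigma x j {} + htens (dtens v) j {}"
    by (metis plus_fun_apply)
  then have "v j {} - x j = (sigma (x j) {} - x j) + htens (dtens v) j {}"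
    using True by (simp add: sigT_def)
  then show ?thesis
    using tideal_add[OF pi_sig[rule_format, of "x j"] htens_augment_tideal[OF dtens_closed, of v j]]
      \<open>v \<in> tensors\<close> by (simp add: v_def algebra_simps)
next
  case False
  then show ?thesis using tensorsD(2)[OF pert.neumann_closed[OF sigT_closed]] vecsD[OF x]
    by (simp add: tideal_zero)
qed

lemma psi_chain:
  assumes x: "x \<in> vecs r"
  shows "psi r par n D h sigma (mv r D x) = (\<lambda>i. (-1) ^ n * mv r D (psi r par n D h sigma x) i)"
proof -
  define v where "v = pert.neumann (sigT r sigma x)"
  have vT: "v \<in> tensors" by (simp add: v_def pert.neumann_closed sigT_closed)
  have cycle: "deltens v + dtens v = pert.neumann (sigpi (dtens v))"
    unfolding v_def by (rule pert.neumann_cycle_identity) (simp_all add: sigT_closed htens_sigT deltens_sigT)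
  have "sigpi (dtens v) = sigT r sigma (mv r D x)"
    unfolding sigpi_def
  proof (rule sigT_wd)
    fix i assume i: "i < r"
    have "dtens v i {} - mv r D x i = mv r D (\<lambda>j. v j {} - x j) i"
      using i by (simp add: dT_def mv_def sum_subtractf algebra_simps)
    then show "in_tideal t n (dtens v i {} - mv r D x i)"
      using tideal_mv[OF neumann_sigT_augment_tideal[OF x]] by (simp add: v_def)
  qed
  then have "epsT r par n (deltens v + dtens v) = psi r par n D h sigma (mv r D x)"
    unfolding cycle by (simp add: epsT_neumann_sigT)
  moreover have "epsT r par n (deltens v + dtens v) = (\<lambda>i. (-1) ^ n * mv r D (psi r par n D h sigma x) i)"
    unfolding epsT_add epsT_deltens epsT_dtens[OF vT] by (simp add: v_def epsT_neumann_sigT)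
  ultimately show ?thesis by simp
qed

lemma odd_Smap_htpy: "odd_Smap phi r par htpy"
  by (rule odd_SmapI) (simp_all add: htpy_vecs htpy_add htpy_scal vparity_htpy)

abbreviation htpy_quot :: "(nat \<Rightarrow> 'r) \<Rightarrow> nat \<Rightarrow> 'r" where
  "htpy_quot x \<equiv> theta r n L (htpy (psi r par n D h sigma x))"

lemma odd_Smap_quot_htpy_quot: "odd_Smap_quot phi t n r par htpy_quot"
proof (rule odd_Smap_quotI)
  fix q x assume "vparity q x"
  from vparity_theta[OF vparity_htpy[OF vparity_psi[OF this]]]
  show "vparity (\<not> q) (htpy_quot x)" by (cases "odd n") simp_all
qed (simp_all add: theta_vecs htpy_vecs psi_wd psi_add htpy_add theta_add psi_scal htpy_scal theta_scal qeq_refl)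

text \<open>Conjugating the homotopy \<open>\<psi>\<theta> \<simeq> 1\<close> by \<open>\<theta>\<close> and \<open>\<psi>\<close>; \<open>\<theta>\<close> commutes with the differentials
  only modulo \<open>t\<close>, which is why this holds in \<open>X/tX\<close> only.\<close>
lemma theta_psi_idempotent:
  assumes x: "x \<in> vecs r"
  shows "qeq t n
    (\<lambda>i. theta r n L (psi r par n D h sigma (theta r n L (psi r par n D h sigma x))) i
      - theta r n L (psi r par n D h sigma x) i)
    (\<lambda>i. mv r D (htpy_quot x) i + htpy_quot (mv r D x) i)"
proof -
  define y where "y = psi r par n D h sigma x"
  define a where "a = (\<lambda>i. (-1) ^ n * mv r D (htpy y) i)"
  have y: "y \<in> vecs r" by (simp add: y_def psi_vecs)
  have "(\<lambda>j. (-1) ^ n * mv r D y j) = psi r par n D h sigma (mv r D x)"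
    using psi_chain[OF x] by (simp add: y_def)
  then have "psi r par n D h sigma (theta r n L y) - y = a + htpy (psi r par n D h sigma (mv r D x))"
    using psi_theta_homotopy[OF y] by (simp add: a_def fun_eq_iff)
  then have "theta r n L (psi r par n D h sigma (theta r n L y)) - theta r n L y
      = theta r n L a + htpy_quot (mv r D x)"
    by (simp flip: theta_diff add: theta_plus)
  moreover have "qeq t n (theta r n L a) (mv r D (theta r n L (htpy y)))"
    unfolding a_def by (rule theta_chain_mod_tideal[OF htpy_vecs])
  ultimately show ?thesis by (simp add: qeq_def y_def fun_eq_iff)
qed

end

theorem theorem7p4:
  fixes phi :: "'s::comm_ring_1 \<Rightarrow> 'r::comm_ring_1"
    and W :: 's
    and r :: nat and par :: "nat \<Rightarrow> bool" and D :: "nat \<Rightarrow> nat \<Rightarrow> 'r"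
    and n :: nat and t :: "nat \<Rightarrow> 'r" and L :: "nat \<Rightarrow> nat \<Rightarrow> nat \<Rightarrow> 'r"
    and sigma :: "'r \<Rightarrow> nat set \<Rightarrow> 'r"
    and h :: "(nat set \<Rightarrow> 'r) \<Rightarrow> (nat set \<Rightarrow> 'r)"
  assumes hom: "is_ring_hom phi"
    and mf: "is_mf r par (phi W) D"
    and qreg: "quasi_regular t n"
    and lam_odd: "\<forall>j<n. odd_matrix r par (L j)"
    and lam_htpy: "\<forall>j<n. \<forall>a<r. \<forall>b<r.
          (\<Sum>k<r. L j a k * D k b) + (\<Sum>k<r. D a k * L j k b) = (if a = b then t j else 0)"
    and sig_kos: "\<forall>a. sigma a \<in> kos n \<and> homog 0 (sigma a)"
    and sig_wd: "\<forall>a b. in_tideal t n (a - b) \<longrightarrow> sigma a = sigma b"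
    and sig_add: "\<forall>a b. sigma (a + b) = (\<lambda>B. sigma a B + sigma b B)"
    and sig_S: "\<forall>s a. sigma (phi s * a) = (\<lambda>B. phi s * sigma a B)"
    and sig_chain: "\<forall>a. kdelta t n (sigma a) = (\<lambda>_. 0)"
    and h_kos: "\<forall>k\<in>kos n. h k \<in> kos n"
    and h_deg: "\<forall>p. \<forall>k\<in>kos n. homog p k \<longrightarrow> homog (p + 1) (h k)"
    and h_add: "\<forall>k1\<in>kos n. \<forall>k2\<in>kos n. h (\<lambda>B. k1 B + k2 B) = (\<lambda>B. h k1 B + h k2 B)"
    and h_S: "\<forall>s. \<forall>k\<in>kos n. h (\<lambda>B. phi s * k B) = (\<lambda>B. phi s * h k B)"
    and pi_sig: "\<forall>a. in_tideal t n (sigma a {} - a)"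
    and sig_pi: "\<forall>k\<in>kos n. sigma (k {}) = (\<lambda>B. k B + kdelta t n (h k) B + h (kdelta t n k) B)"
    and hh: "\<forall>k\<in>kos n. h (h k) = (\<lambda>_. 0)"
    and h_sig: "\<forall>a. h (sigma a) = (\<lambda>_. 0)"
    and pi_h: "\<forall>k\<in>kos n. in_tideal t n (h k {})"
  shows "(\<exists>H. odd_Smap phi r par H \<and>
            (\<forall>x\<in>vecs r. (\<lambda>i. psi r par n D h sigma (theta r n L x) i - x i)
               = (\<lambda>i. (-1) ^ n * mv r D (H x) i + H (\<lambda>j. (-1) ^ n * mv r D x j) i)))
       \<and> (\<exists>H. odd_Smap_quot phi t n r par H \<and>
            (\<forall>x\<in>vecs r. qeq t n
               (\<lambda>i. theta r n L (psi r par n D h sigma (theta r n L (psi r par n D h sigma x))) i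
                    - theta r n L (psi r par n D h sigma x) i)
               (\<lambda>i. mv r D (H x) i + H (mv r D x) i)))
       \<and> (\<forall>x\<in>vecs r. qeq t n (theta r n L (psi r par n D h sigma x))
            (theta r n L (epsT r par n (((hT r par h \<circ> dT r D) ^^ n) (sigT r sigma x)))))"
proof -
  interpret mf_koszul phi W r par D n t L sigma h
    by unfold_locales (fact assms)+
  have "\<forall>x\<in>vecs r. qeq t n (theta r n L (psi r par n D h sigma x))
      (theta r n L (epsT r par n (((hT r par h \<circ> dT r D) ^^ n) (sigT r sigma x))))"
    by (simp add: psi_eq_top_term qeq_refl)
  with odd_Smap_htpy psi_theta_homotopy odd_Smap_quot_htpy_quot theta_psi_idempotent
  show ?thesis by blast
qed

end
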